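(* Let $\theta^n(x^1,x^2)$, $n=1,\dots,m$, be dependent variables and $u^\alpha=u^\alpha([\theta],x^3)\in\mathfrak g$, $\alpha=1,2$, such that the equation $\Delta\equiv D_2u^1-D_1u^2+[u^1,u^2]=0$ is equivalent to an integrable system of PDEs in $\theta$ independent of the spectral parameter $x^3$, and is the compatibility condition of the LSP $D_\alpha\Phi=u^\alpha\Phi$, $\alpha=1,2$, for a $G$-valued matrix function $\Phi=\Phi([\theta],x^3)$ (which solves this LSP). Suppose the generalized vector field $\vec w_{\mathcal Q}=\sum_n\mathcal Q_n[\theta]\,\partial/\partial\theta^n$ is a generalized symmetry of $\Delta=0$. Then the following are equivalent: (1) $\vec w_{\mathcal Q}$ is a symmetry of the LSP in the sense that $\mathrm{pr}\,\vec w_{\mathcal Q}(D_\alpha\Phi-u^\alpha\Phi)=0$ whenever $D_\alpha\Phi-u^\alpha\Phi=0$, $\alpha=1,2$; (2) the $\mathfrak g$-valued immersion function $\widetilde F(x^i)=F([\theta],x^3)=\Phi^{-1}\,\mathrm{pr}\,\vec w_{\mathcal Q}\Phi$ has tangent vectors $D_\alpha F=\Phi^{-1}(\mathrm{pr}\,\vec w_{\mathcal Q}u^\alpha)\Phi$, $\alpha=1,2$; (3) the infinitesimal deformation $(u^1,u^2,\Phi)\mapsto(u^1,u^2,\Phi)+\epsilon(\mathrm{pr}\,\vec w_{\mathcal Q}u^1,\mathrm{pr}\,\vec w_{\mathcal Q}u^2,\mathrm{pr}\,\vec w_{\mathcal Q}\Phi)$ is a generalized infinitesimal symmetry of the system $\Delta=0$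 together with its LSP.
   Context: $G$ is a matrix Lie group with Lie algebra $\mathfrak g$. The independent variables are $x^1,x^2$; $x^3$ is the spectral parameter. For multi-indices $J$ with entries in $\{1,2\}$, $\theta^n_J$ are jet coordinates; $f([\theta],x^3)$ denotes a function of $x^1,x^2,x^3$ and finitely many $\theta^n_J$. Total derivatives: $D_\alpha=\partial/\partial x^\alpha+\theta^n_{J,\alpha}\partial/\partial\theta^n_J$. Prolongation: $\mathrm{pr}\,\vec w_{\mathcal Q}=\sum_J D_J\mathcal Q_n\,\partial/\partial\theta^n_J$, acting entrywise on matrix-valued differential functions such as $u^\alpha$ and $\Phi$. $\vec w_{\mathcal Q}$ is a generalized symmetry of $\Delta=0$ iff $\mathrm{pr}\,\vec w_{\mathcal Q}(\Delta)=0$ whenever $\Delta=0$. The deformation $(u^1,u^2,\Phi)\mapsto(u^1,u^2,\Phi)+\epsilon(A_1,A_2,\Psi)$ is called a generalized infinitesimal symmetry of the system together with its LSP if $D_2A_1-D_1A_2+[A_1,u^2]+[u^1,A_2]=0$ on solutions, $\Phi^{-1}\Psi\in\mathfrak g$, and $D_\alpha\Psi=u^\alpha\Psi+A_\alpha\Phi$, $\alpha=1,2$. *)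

theory Defs
  imports "HOL-Analysis.Analysis"
begin

text \<open>Jet coordinates: the independent variables x1, x2, the spectral parameter x3,
  and the derivative coordinates Th n a b standing for theta^n_J where the (unordered)
  multi-index J contains the index 1 exactly a times and the index 2 exactly b times.\<close>

datatype jc = X1 | X2 | X3 | Th nat nat nat

type_synonym jet = "jc \<Rightarrow> real"

fun relevant :: "nat \<Rightarrow> nat \<Rightarrow> jc \<Rightarrow> bool" where
  "relevant m N (Th n a b) = (1 \<le> n \<and> n \<le> m \<and> a + b \<le> N)"
| "relevant m N _ = True"

definition depends_only :: "nat \<Rightarrow> nat \<Rightarrow> (jet \<Rightarrow> 'v) \<Rightarrow> bool" where
  "depends_only m N f \<longleftrightarrow> (\<forall>p q. (\<forall>c. relevant m N c \<longrightarrow> p c = q c) \<longrightarrow> f p = f q)"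

definition indep_x3 :: "(jet \<Rightarrow> 'v) \<Rightarrow> bool" where
  "indep_x3 f \<longleftrightarrow> (\<forall>p t. f (p(X3 := t)) = f p)"

definition pd :: "jc \<Rightarrow> (jet \<Rightarrow> 'v::real_normed_vector) \<Rightarrow> jet \<Rightarrow> 'v" where
  "pd c f p = vector_derivative (\<lambda>t. f (p(c := t))) (at (p c))"

fun ipd :: "jc list \<Rightarrow> (jet \<Rightarrow> 'v::real_normed_vector) \<Rightarrow> jet \<Rightarrow> 'v" where
  "ipd [] f = f"
| "ipd (c # cs) f = pd c (ipd cs f)"

text \<open>For functions depending on finitely many
  coordinates this is exactly C-infinity smoothness in those coordinates.\<close>
definition smooth_jet :: "(jet \<Rightarrow> 'v::real_normed_vector) \<Rightarrow> bool" where
  "smooth_jet f \<longleftrightarrow>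
     (\<forall>cs. continuous_on UNIV (ipd cs f)) \<and>
     (\<forall>cs c p. (\<lambda>t. ipd cs f (p(c := t))) differentiable (at (p c)))"

definition diff_fun :: "nat \<Rightarrow> (jet \<Rightarrow> 'v::real_normed_vector) \<Rightarrow> bool" where
  "diff_fun m f \<longleftrightarrow> smooth_jet f \<and> (\<exists>N. depends_only m N f)"

definition ord :: "nat \<Rightarrow> (jet \<Rightarrow> 'v) \<Rightarrow> nat" where
  "ord m f = (LEAST N. depends_only m N f)"

definition thcoords :: "nat \<Rightarrow> nat \<Rightarrow> (nat \<times> nat \<times> nat) set" where
  "thcoords m N = {(n, a, b). 1 \<le> n \<and> n \<le> m \<and> a + b \<le> N}"

fun xc :: "nat \<Rightarrow> jc" where
  "xc (Suc 0) = X1"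
| "xc _ = X2"

fun shift :: "nat \<Rightarrow> nat \<times> nat \<times> nat \<Rightarrow> jc" where
  "shift (Suc 0) (n, a, b) = Th n (Suc a) b"
| "shift _ (n, a, b) = Th n a (Suc b)"

definition TD :: "nat \<Rightarrow> nat \<Rightarrow> (jet \<Rightarrow> 'v::real_normed_vector) \<Rightarrow> jet \<Rightarrow> 'v" where
  "TD m \<alpha> f p = pd (xc \<alpha>) f p +
     (\<Sum>(n, a, b) \<in> thcoords m (ord m f). p (shift \<alpha> (n, a, b)) *\<^sub>R pd (Th n a b) f p)"

definition TDJ :: "nat \<Rightarrow> nat \<Rightarrow> nat \<Rightarrow> (jet \<Rightarrow> 'v::real_normed_vector) \<Rightarrow> jet \<Rightarrow> 'v" where
  "TDJ m a b f = (TD m 1 ^^ a) ((TD m 2 ^^ b) f)"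

definition prw :: "nat \<Rightarrow> (nat \<Rightarrow> jet \<Rightarrow> real) \<Rightarrow> (jet \<Rightarrow> 'v::real_normed_vector) \<Rightarrow> jet \<Rightarrow> 'v" where
  "prw m Q f p = (\<Sum>(n, a, b) \<in> thcoords m (ord m f). TDJ m a b (Q n) p *\<^sub>R pd (Th n a b) f p)"

definition zero_set :: "nat \<Rightarrow> (jet \<Rightarrow> 'v::real_normed_vector) set \<Rightarrow> jet set" where
  "zero_set m E = {p. \<forall>f\<in>E. \<forall>a b. TDJ m a b f p = 0}"

type_synonym 'k cmat = "complex^'k^'k"

definition brk :: "'k::finite cmat \<Rightarrow> 'k cmat \<Rightarrow> 'k cmat" where
  "brk A B = A ** B - B ** A"

fun matpow :: "'k::finite cmat \<Rightarrow> nat \<Rightarrow> 'k cmat" where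
  "matpow A 0 = mat 1"
| "matpow A (Suc n) = A ** matpow A n"

definition mexp :: "'k::finite cmat \<Rightarrow> 'k cmat" where
  "mexp A = (\<Sum>n. (1 / fact n) *\<^sub>R matpow A n)"

definition matrix_lie_group :: "'k::finite cmat set \<Rightarrow> bool" where
  "matrix_lie_group G \<longleftrightarrow>
     G \<subseteq> {A. invertible A} \<and> mat 1 \<in> G \<and>
     (\<forall>A\<in>G. \<forall>B\<in>G. A ** B \<in> G) \<and> (\<forall>A\<in>G. matrix_inv A \<in> G) \<and>
     closedin (top_of_set {A. invertible A}) G"

definition lie_alg :: "'k::finite cmat set \<Rightarrow> 'k cmat set" where
  "lie_alg G = {X. \<forall>t::real. mexp (t *\<^sub>R X) \<in> G}"

text \<open>S is the (prolonged) solution set of Delta = 0; u 1, u 2 are the potentials.\<close>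
definition gen_inf_sym ::
  "nat \<Rightarrow> 'k::finite cmat set \<Rightarrow> jet set \<Rightarrow> (nat \<Rightarrow> jet \<Rightarrow> 'k cmat) \<Rightarrow> (jet \<Rightarrow> 'k cmat)
    \<Rightarrow> (nat \<Rightarrow> jet \<Rightarrow> 'k cmat) \<Rightarrow> (jet \<Rightarrow> 'k cmat) \<Rightarrow> bool" where
  "gen_inf_sym m G S u \<Phi> A \<Psi> \<longleftrightarrow>
     (\<forall>p\<in>S. TD m 2 (A 1) p - TD m 1 (A 2) p + brk (A 1 p) (u 2 p) + brk (u 1 p) (A 2 p) = 0) \<and>
     (\<forall>p. matrix_inv (\<Phi> p) ** \<Psi> p \<in> lie_alg G) \<and>
     (\<forall>\<alpha>\<in>{1,2}. \<forall>p\<in>S. TD m \<alpha> \<Psi> p = u \<alpha> p ** \<Psi> p + A \<alpha> p ** \<Phi> p)"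

end

theory Submission
  imports Defs
begin

text \<open>Write \<Psi> for pr w_Q \<Phi>. Total derivatives and the prolongation are first-order operators
  in finitely many jet coordinates, and their commutator is again first order, with coefficients
  D_\<alpha> (D_J Q_n) - pr w_Q (\<theta>^n_{J,\<alpha>}) = 0 since second partial derivatives commute. Hence
  pr w_Q commutes with D_\<alpha>, and being a derivation it maps D_\<alpha> \<Phi> - u^\<alpha> \<Phi> to
  D_\<alpha> \<Psi> - u^\<alpha> \<Psi> - (pr w_Q u^\<alpha>) \<Phi>. On solutions, where D_\<alpha> \<Phi> = u^\<alpha> \<Phi>, each of the three
  conditions therefore reduces to D_\<alpha> \<Psi> = u^\<alpha> \<Psi> + (pr w_Q u^\<alpha>) \<Phi>: condition (2) after
  expanding D_\<alpha> (\<Phi>^-1 \<Psi>) with D_\<alpha> \<Phi>^-1 = - \<Phi>^-1 u^\<alpha>, and condition (3) because its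
  zero-curvature part is pr w_Q \<Delta> = 0, while \<Phi>^-1 \<Psi> is a linear combination of the tangent
  vectors \<Phi>^-1 \<partial>_c \<Phi> of G and so lies in the Lie algebra. That the Lie algebra of a closed
  matrix group is closed under addition follows from the product formula.\<close>

section \<open>Complex matrices as a Banach algebra\<close>

definition mat_blinfun :: "'k::finite cmat \<Rightarrow> (complex^'k) \<Rightarrow>\<^sub>L (complex^'k)" where
  "mat_blinfun A = Blinfun ((*v) A)"

lemma blinfun_apply_mat_blinfun [simp]: "blinfun_apply (mat_blinfun A) x = A *v x"
  by (simp add: mat_blinfun_def bounded_linear_Blinfun_apply)

lemma mat_blinfun_add: "mat_blinfun (A + B) = mat_blinfun A + mat_blinfun B"
  by (rule blinfun_eqI) (simp add: plus_blinfun.rep_eq matrix_vector_mult_add_rdistrib)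

lemma mat_blinfun_scaleR: "mat_blinfun (c *\<^sub>R A) = c *\<^sub>R mat_blinfun A"
  by (rule blinfun_eqI)
    (simp add: scaleR_blinfun.rep_eq matrix_vector_mult_def vec_eq_iff scaleR_sum_right)

lemma mat_blinfun_mult: "mat_blinfun (A ** B) = mat_blinfun A o\<^sub>L mat_blinfun B"
  by (rule blinfun_eqI) (simp add: matrix_vector_mul_assoc)

lemma mat_blinfun_one: "mat_blinfun (mat 1) = id_blinfun"
  by (rule blinfun_eqI) simp

lemma linear_mat_blinfun: "linear mat_blinfun"
  by (rule linearI) (simp_all add: mat_blinfun_add mat_blinfun_scaleR)

lemma bounded_linear_mat_blinfun: "bounded_linear (mat_blinfun :: 'k::finite cmat \<Rightarrow> _)"
  using linear_mat_blinfun linear_conv_bounded_linear by blast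

lemma norm_entry_le_norm_mat_blinfun: "norm ((A::'k::finite cmat) $ i $ j) \<le> norm (mat_blinfun A)"
proof -
  have "A $ i $ j = (A *v axis j 1) $ i"
    by (simp add: matrix_vector_mult_def axis_def if_distrib cong: if_cong)
  also have "norm \<dots> \<le> norm (blinfun_apply (mat_blinfun A) (axis j 1))"
    by (simp add: Finite_Cartesian_Product.norm_nth_le)
  also have "\<dots> \<le> norm (mat_blinfun A) * norm (axis j (1::complex))"
    by (rule norm_blinfun)
  also have "norm (axis j (1::complex)) = 1"
    by (simp add: norm_vec_def L2_set_def axis_def if_distrib if_distribR cong: if_cong)
  finally show ?thesis by simp
qed

lemma norm_le_norm_mat_blinfun:
  "norm (A::'k::finite cmat) \<le> of_nat (CARD('k) * CARD('k)) * norm (mat_blinfun A)"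
proof -
  have "norm A \<le> (\<Sum>i\<in>UNIV. norm (A $ i))" by (simp add: norm_vec_def L2_set_le_sum)
  also have "\<dots> \<le> (\<Sum>i\<in>(UNIV::'k set). \<Sum>j\<in>(UNIV::'k set). norm (A $ i $ j))"
    by (intro sum_mono) (simp add: norm_vec_def L2_set_le_sum)
  also have "\<dots> \<le> (\<Sum>i\<in>(UNIV::'k set). \<Sum>j\<in>(UNIV::'k set). norm (mat_blinfun A))"
    by (intro sum_mono norm_entry_le_norm_mat_blinfun)
  finally show ?thesis by simp
qed

lemma mat_blinfun_eq_0_iff [simp]: "mat_blinfun A = 0 \<longleftrightarrow> A = 0"
  using norm_le_norm_mat_blinfun[of A] by (auto simp: linear_0[OF linear_mat_blinfun])

text \<open>The Euclidean norm of complex^'k^'k is submultiplicative but gives the identity norm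
  sqrt CARD('k), so it does not make matrices a real_normed_algebra_1. This copy of the matrix
  type carries the operator norm instead, making the library's exponential and calculus of
  Banach-algebra-valued curves available; mexp is its exponential (mexp_eq_exp).\<close>

typedef 'k mat_alg = "UNIV :: 'k::finite cmat set"
  morphisms to_cmat of_cmat
  by simp

setup_lifting type_definition_mat_alg

instantiation mat_alg :: (finite) real_vector
begin
lift_definition zero_mat_alg :: "'a mat_alg" is 0 .
lift_definition plus_mat_alg :: "'a mat_alg \<Rightarrow> 'a mat_alg \<Rightarrow> 'a mat_alg" is "(+)" .
lift_definition minus_mat_alg :: "'a mat_alg \<Rightarrow> 'a mat_alg \<Rightarrow> 'a mat_alg" is "(-)" .
lift_definition uminus_mat_alg :: "'a mat_alg \<Rightarrow> 'a mat_alg" is uminus .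
lift_definition scaleR_mat_alg :: "real \<Rightarrow> 'a mat_alg \<Rightarrow> 'a mat_alg" is scaleR .
instance by standard (transfer; simp add: algebra_simps)+
end

instantiation mat_alg :: (finite) real_normed_vector
begin
lift_definition norm_mat_alg :: "'a mat_alg \<Rightarrow> real" is "\<lambda>A. norm (mat_blinfun A)" .
definition sgn_mat_alg :: "'a mat_alg \<Rightarrow> 'a mat_alg" where
  "sgn_mat_alg x = inverse (norm x) *\<^sub>R x"
definition dist_mat_alg :: "'a mat_alg \<Rightarrow> 'a mat_alg \<Rightarrow> real" where
  "dist_mat_alg x y = norm (x - y)"
definition uniformity_mat_alg :: "('a mat_alg \<times> 'a mat_alg) filter" where
  "uniformity_mat_alg = (INF e\<in>{0 <..}. principal {(x, y). dist x y < e})"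
definition open_mat_alg :: "'a mat_alg set \<Rightarrow> bool" where
  "open_mat_alg S = (\<forall>x\<in>S. \<forall>\<^sub>F (x', y) in uniformity. x' = x \<longrightarrow> y \<in> S)"
instance
proof
  fix x y :: "'a mat_alg" and a :: real
  show "norm x = 0 \<longleftrightarrow> x = 0"
    by transfer simp
  show "norm (x + y) \<le> norm x + norm y"
    by transfer (simp add: mat_blinfun_add norm_triangle_ineq)
  show "norm (a *\<^sub>R x) = \<bar>a\<bar> * norm x"
    by transfer (simp add: mat_blinfun_scaleR)
qed (simp_all add: sgn_mat_alg_def dist_mat_alg_def uniformity_mat_alg_def open_mat_alg_def)
end

instantiation mat_alg :: (finite) ring_1
begin
lift_definition one_mat_alg :: "'a mat_alg" is "mat 1" .
lift_definition times_mat_alg :: "'a mat_alg \<Rightarrow> 'a mat_alg \<Rightarrow> 'a mat_alg" is "(**)" .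
instance
proof
  fix a b c :: "'a mat_alg"
  show "a * b * c = a * (b * c)" by transfer (simp add: matrix_mul_assoc)
  show "(a + b) * c = a * c + b * c"
    by transfer (vector matrix_matrix_mult_def sum.distrib[symmetric] field_simps)
  show "a * (b + c) = a * b + a * c" by transfer (simp add: matrix_add_ldistrib)
  show "1 * a = a" by transfer simp
  show "a * 1 = a" by transfer simp
  show "(0::'a mat_alg) \<noteq> 1"
  proof transfer
    have "(mat 1 :: 'a cmat) $ undefined $ undefined = 1" by (simp add: mat_def)
    then show "(0::'a cmat) \<noteq> mat 1" by auto
  qed
qed
end

instance mat_alg :: (finite) real_normed_algebra_1
proof
  fix x y :: "'a mat_alg" and a :: real
  show "a *\<^sub>R x * y = a *\<^sub>R (x * y)" by transfer (simp add: scalar_matrix_assoc)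
  show "x * a *\<^sub>R y = a *\<^sub>R (x * y)" by transfer (simp add: matrix_scalar_ac scalar_matrix_assoc)
  show "norm (x * y) \<le> norm x * norm y" by transfer (simp add: mat_blinfun_mult norm_blinfun_compose)
  show "norm (1::'a mat_alg) = 1" by transfer (simp add: mat_blinfun_one)
qed

lemma to_cmat_add: "to_cmat (x + y) = to_cmat x + to_cmat y" by transfer simp
lemma to_cmat_minus: "to_cmat (- x) = - to_cmat x" by transfer simp
lemma to_cmat_scaleR: "to_cmat (c *\<^sub>R x) = c *\<^sub>R to_cmat x" by transfer simp
lemma to_cmat_mult: "to_cmat (x * y) = to_cmat x ** to_cmat y" by transfer simp
lemma to_cmat_one: "to_cmat 1 = mat 1" by transfer simp
lemma of_cmat_mult: "of_cmat (A ** B) = of_cmat A * of_cmat B" by transfer simp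
lemma of_cmat_scaleR: "of_cmat (c *\<^sub>R A) = c *\<^sub>R of_cmat A" by transfer simp
lemma of_cmat_one: "of_cmat (mat 1) = 1" by transfer simp

lemma to_cmat_power: "to_cmat (x ^ n) = matpow (to_cmat x) n"
  by (induction n) (simp_all add: to_cmat_one to_cmat_mult)

lemma bounded_linear_to_cmat: "bounded_linear (to_cmat :: 'k::finite mat_alg \<Rightarrow> 'k cmat)"
proof
  show "\<exists>K. \<forall>x::'k mat_alg. norm (to_cmat x) \<le> norm x * K"
    using norm_le_norm_mat_blinfun by (metis mult.commute norm_mat_alg.rep_eq)
qed (simp_all add: to_cmat_add to_cmat_scaleR)

lemma bounded_linear_of_cmat: "bounded_linear (of_cmat :: 'k::finite cmat \<Rightarrow> 'k mat_alg)"
proof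
  obtain K where "\<And>A::'k cmat. norm (mat_blinfun A) \<le> norm A * K"
    using bounded_linear.bounded[OF bounded_linear_mat_blinfun] by blast
  then show "\<exists>K. \<forall>x::'k cmat. norm (of_cmat x) \<le> norm x * K"
    by (auto simp: norm_mat_alg.rep_eq of_cmat_inverse)
qed (simp_all add: plus_mat_alg.abs_eq scaleR_mat_alg.abs_eq)

instance mat_alg :: (finite) banach
proof
  fix X :: "nat \<Rightarrow> 'a mat_alg"
  assume "Cauchy X"
  then have "Cauchy (\<lambda>n. to_cmat (X n))"
    by (rule bounded_linear.Cauchy[OF bounded_linear_to_cmat])
  then obtain A where "(\<lambda>n. to_cmat (X n)) \<longlonglongrightarrow> A"
    using Cauchy_convergent_iff convergent_def by blast
  from bounded_linear.tendsto[OF bounded_linear_of_cmat this]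
  show "convergent X" by (auto simp: to_cmat_inverse convergent_def)
qed

lemma bounded_bilinear_matrix_mult:
  "bounded_bilinear ((**) :: 'k::finite cmat \<Rightarrow> 'k cmat \<Rightarrow> 'k cmat)"
proof
  fix a a' b b' :: "'k cmat" and r :: real
  show "(a + a') ** b = a ** b + a' ** b"
    by (vector matrix_matrix_mult_def sum.distrib[symmetric] field_simps)
  show "a ** (b + b') = a ** b + a ** b'" by (rule matrix_add_ldistrib)
  show "(r *\<^sub>R a) ** b = r *\<^sub>R (a ** b)" by (simp add: scalar_matrix_assoc)
  show "a ** (r *\<^sub>R b) = r *\<^sub>R (a ** b)" by (simp add: matrix_scalar_ac scalar_matrix_assoc)
next
  obtain K where K: "\<And>A::'k cmat. norm (of_cmat A) \<le> norm A * K" and "K \<ge> 0"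
    using bounded_linear.nonneg_bounded[OF bounded_linear_of_cmat] by blast
  obtain C where C: "\<And>x::'k mat_alg. norm (to_cmat x) \<le> norm x * C" and "C \<ge> 0"
    using bounded_linear.nonneg_bounded[OF bounded_linear_to_cmat] by blast
  show "\<exists>K. \<forall>(a::'k cmat) (b::'k cmat). norm (a ** b) \<le> norm a * norm b * K"
  proof (intro exI[of _ "K * K * C"] allI)
    fix a b :: "'k cmat"
    have "norm (a ** b) = norm (to_cmat (of_cmat a * of_cmat b))"
      by (simp add: to_cmat_mult of_cmat_inverse)
    also have "\<dots> \<le> norm (of_cmat a) * norm (of_cmat b) * C"
      using C norm_mult_ineq \<open>C \<ge> 0\<close> by (meson mult_right_mono order_trans)
    also have "\<dots> \<le> (norm a * K) * (norm b * K) * C"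
      using K \<open>K \<ge> 0\<close> \<open>C \<ge> 0\<close> by (intro mult_right_mono mult_mono) simp_all
    finally show "norm (a ** b) \<le> norm a * norm b * (K * K * C)" by (simp add: ac_simps)
  qed
qed

lemma bounded_bilinear_brk: "bounded_bilinear (brk :: 'k::finite cmat \<Rightarrow> _)"
proof -
  interpret mm: bounded_bilinear "(**) :: 'k cmat \<Rightarrow> 'k cmat \<Rightarrow> 'k cmat" by (rule bounded_bilinear_matrix_mult)
  show ?thesis
  proof
    fix a a' b b' :: "'k cmat" and r :: real
    show "brk (a + a') b = brk a b + brk a' b" "brk a (b + b') = brk a b + brk a b'"
      by (simp_all add: brk_def mm.add_left mm.add_right)
    show "brk (r *\<^sub>R a) b = r *\<^sub>R brk a b" "brk a (r *\<^sub>R b) = r *\<^sub>R brk a b"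
      by (simp_all add: brk_def mm.scaleR_left mm.scaleR_right scaleR_diff_right)
  next
    obtain K where K: "\<And>(a::'k cmat) (b::'k cmat). norm (a ** b) \<le> norm a * norm b * K"
      using mm.bounded by auto
    show "\<exists>K. \<forall>(a::'k cmat) (b::'k cmat). norm (brk a b) \<le> norm a * norm b * K"
    proof (intro exI allI)
      fix a b :: "'k cmat"
      have "norm (brk a b) \<le> norm (a ** b) + norm (b ** a)"
        unfolding brk_def by (rule norm_triangle_ineq4)
      also have "\<dots> \<le> norm a * norm b * (2 * K)"
        using K[of a b] K[of b a] by (simp add: algebra_simps)
      finally show "norm (brk a b) \<le> norm a * norm b * (2 * K)" .
    qed
  qed
qed

section \<open>Curves in a Banach algebra\<close>

lemma has_vector_derivative_iff_difference_quotient: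
  fixes f :: "real \<Rightarrow> 'a::real_normed_vector"
  shows "(f has_vector_derivative D) (at x) \<longleftrightarrow> ((\<lambda>y. (f y - f x) /\<^sub>R (y - x)) \<longlongrightarrow> D) (at x)"
proof -
  have sgn_quotient: "(v - d *\<^sub>R D) /\<^sub>R \<bar>d\<bar> = sgn d *\<^sub>R (v /\<^sub>R d - D)"
    if "d \<noteq> 0" for d :: real and v
  proof -
    have sg: "sgn d = d / \<bar>d\<bar>" by (simp add: real_sgn_eq)
    have "sgn d *\<^sub>R (v /\<^sub>R d - D) = (sgn d / d) *\<^sub>R v - sgn d *\<^sub>R D"
      by (simp add: scaleR_right_diff_distrib divide_inverse)
    also have "sgn d / d = 1 / \<bar>d\<bar>" using that by (simp add: sg)
    also have "(1 / \<bar>d\<bar>) *\<^sub>R v - sgn d *\<^sub>R D = (v - d *\<^sub>R D) /\<^sub>R \<bar>d\<bar>"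
      by (simp add: sg scaleR_right_diff_distrib divide_inverse mult.commute)
    finally show ?thesis by simp
  qed
  have eq: "norm ((f y - f x - (y - x) *\<^sub>R D) /\<^sub>R norm (y - x)) = norm ((f y - f x) /\<^sub>R (y - x) - D)"
    if "y \<noteq> x" for y
    using sgn_quotient[of "y - x" "f y - f x"] that by (simp add: abs_sgn)
  have "(f has_vector_derivative D) (at x) \<longleftrightarrow>
      ((\<lambda>y. (f y - f x - (y - x) *\<^sub>R D) /\<^sub>R norm (y - x)) \<longlongrightarrow> 0) (at x)"
    unfolding has_vector_derivative_def has_derivative_at_within
    using bounded_linear_scaleR_left[of D] by simp
  also have "\<dots> \<longleftrightarrow> ((\<lambda>y. norm ((f y - f x - (y - x) *\<^sub>R D) /\<^sub>R norm (y - x))) \<longlongrightarrow> 0) (at x)"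
    by (rule tendsto_norm_zero_iff[symmetric])
  also have "\<dots> \<longleftrightarrow> ((\<lambda>y. norm ((f y - f x) /\<^sub>R (y - x) - D)) \<longlongrightarrow> 0) (at x)"
    by (rule tendsto_cong, rule eventually_mono[OF eventually_neq_at_within[of x]]) (use eq in simp)
  also have "\<dots> \<longleftrightarrow> ((\<lambda>y. (f y - f x) /\<^sub>R (y - x)) \<longlongrightarrow> D) (at x)"
    by (simp add: tendsto_norm_zero_iff LIM_zero_iff)
  finally show ?thesis .
qed

lemma norm_power_diff_le:
  fixes a b :: "'a::real_normed_algebra_1"
  assumes "norm a \<le> K" "norm b \<le> K"
  shows "norm (a ^ Suc n - b ^ Suc n) \<le> real (Suc n) * norm (a - b) * K ^ n"
proof (induction n)
  case (Suc n)
  have "0 \<le> K" using assms(1) norm_ge_zero order_trans by blast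
  have "a ^ Suc (Suc n) - b ^ Suc (Suc n) = a * (a ^ Suc n - b ^ Suc n) + (a - b) * b ^ Suc n"
    by (simp add: algebra_simps)
  then have "norm (a ^ Suc (Suc n) - b ^ Suc (Suc n))
      \<le> norm a * norm (a ^ Suc n - b ^ Suc n) + norm (a - b) * norm (b ^ Suc n)"
    by (metis norm_triangle_le norm_mult_ineq add_mono)
  also have "\<dots> \<le> K * (real (Suc n) * norm (a - b) * K ^ n) + norm (a - b) * K ^ Suc n"
  proof (intro add_mono mult_mono)
    show "norm (b ^ Suc n) \<le> K ^ Suc n"
      by (metis assms(2) norm_ge_zero norm_power_ineq order_trans power_mono)
  qed (use assms Suc.IH \<open>0 \<le> K\<close> in auto)
  finally show ?case by (simp add: algebra_simps)
qed simp

lemma exp_scaleR_of_nat: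
  fixes x :: "'a::{real_normed_algebra_1,banach}"
  shows "exp (real n *\<^sub>R x) = exp x ^ n"
proof (induction n)
  case (Suc n)
  have "exp (real (Suc n) *\<^sub>R x) = exp (x + real n *\<^sub>R x)" by (simp add: algebra_simps)
  also have "\<dots> = exp x * exp (real n *\<^sub>R x)"
    by (rule exp_add_commuting) (simp add: mult_scaleR_right mult_scaleR_left)
  finally show ?case using Suc by simp
qed simp

lemma norm_power_sub_exp_le:
  fixes b X :: "'a::{real_normed_algebra_1,banach}"
  assumes small: "norm (exp (s *\<^sub>R X) - b) \<le> \<bar>s\<bar>"
  shows "norm (b ^ Suc n - exp ((real (Suc n) * s) *\<^sub>R X))
    \<le> real (Suc n) * norm (exp (s *\<^sub>R X) - b) * exp (real (Suc n) * \<bar>s\<bar> * (norm X + 1))"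
proof -
  define K where "K = exp (\<bar>s\<bar> * (norm X + 1))"
  have eK: "norm (exp (s *\<^sub>R X)) \<le> exp (\<bar>s\<bar> * norm X)"
    using norm_exp[of "s *\<^sub>R X"] by simp
  also have "\<dots> \<le> K" by (simp add: K_def algebra_simps)
  finally have aK: "norm (exp (s *\<^sub>R X)) \<le> K" .
  have "norm b \<le> norm (exp (s *\<^sub>R X)) + norm (exp (s *\<^sub>R X) - b)"
    using norm_triangle_sub[of b "exp (s *\<^sub>R X)"] norm_minus_commute[of b "exp (s *\<^sub>R X)"] by simp
  also have "\<dots> \<le> exp (\<bar>s\<bar> * norm X) * (1 + \<bar>s\<bar>)"
    using eK small mult_right_mono[of 1 "exp (\<bar>s\<bar> * norm X)" "\<bar>s\<bar>"] by (simp add: distrib_left)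
  also have "\<dots> \<le> exp (\<bar>s\<bar> * norm X) * exp \<bar>s\<bar>"
    by (intro mult_left_mono) simp_all
  also have "\<dots> = K" by (simp add: K_def algebra_simps flip: exp_add)
  finally have bK: "norm b \<le> K" .
  have "K ^ n \<le> K ^ Suc n"
    by (rule power_increasing) (simp_all add: K_def)
  also have "\<dots> = exp (real (Suc n) * (\<bar>s\<bar> * (norm X + 1)))"
    unfolding K_def by (rule exp_of_nat_mult[symmetric])
  also have "\<dots> = exp (real (Suc n) * \<bar>s\<bar> * (norm X + 1))"
    by (simp add: mult.assoc)
  finally have KC: "K ^ n \<le> exp (real (Suc n) * \<bar>s\<bar> * (norm X + 1))" .
  have "norm (b ^ Suc n - exp ((real (Suc n) * s) *\<^sub>R X)) = norm (exp (s *\<^sub>R X) ^ Suc n - b ^ Suc n)"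
    by (metis exp_scaleR_of_nat norm_minus_commute scaleR_scaleR)
  also have "\<dots> \<le> real (Suc n) * norm (exp (s *\<^sub>R X) - b) * K ^ n"
    by (rule norm_power_diff_le[OF aK bK])
  also have "\<dots> \<le> real (Suc n) * norm (exp (s *\<^sub>R X) - b) * exp (real (Suc n) * \<bar>s\<bar> * (norm X + 1))"
    using KC by (intro mult_left_mono) simp_all
  finally show ?thesis .
qed

lemma power_curve_tendsto_exp:
  fixes \<gamma> :: "real \<Rightarrow> 'a::{real_normed_algebra_1,banach}"
  assumes \<gamma>0: "\<gamma> 0 = 1" and \<gamma>': "(\<gamma> has_vector_derivative X) (at 0)"
  shows "(\<lambda>n. \<gamma> (t / real (Suc n)) ^ Suc n) \<longlonglongrightarrow> exp (t *\<^sub>R X)"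
proof (cases "t = 0")
  case False
  define s where "s n = t / real (Suc n)" for n
  define h where "h r = exp (r *\<^sub>R X) - \<gamma> r" for r
  have "((\<lambda>r. exp (r *\<^sub>R X)) has_vector_derivative X) (at 0)"
    using exp_scaleR_has_vector_derivative_right[where t=0 and A=X] by simp
  then have "(h has_vector_derivative 0) (at 0)"
    unfolding h_def using has_vector_derivative_diff[OF _ \<gamma>'] by fastforce
  then have "((\<lambda>r. h r /\<^sub>R r) \<longlongrightarrow> 0) (at 0)"
    by (simp add: has_vector_derivative_iff_difference_quotient h_def \<gamma>0)
  moreover have "filterlim s (at 0) sequentially"
  proof (rule filterlim_atI)
    show "s \<longlonglongrightarrow> 0"
      unfolding s_def using LIMSEQ_Suc[OF lim_const_over_n[of t]] by simp
  qed (simp add: s_def False)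
  ultimately have hs: "(\<lambda>n. h (s n) /\<^sub>R s n) \<longlonglongrightarrow> 0"
    by (rule filterlim_compose)
  have hn: "norm (h (s n)) = \<bar>s n\<bar> * norm (h (s n) /\<^sub>R s n)" for n
    using False by (simp add: s_def)
  have "eventually (\<lambda>n. norm (h (s n) /\<^sub>R s n) < 1) sequentially"
    using order_tendstoD(2)[OF tendsto_norm_zero[OF hs], of 1] by simp
  then have "eventually (\<lambda>n. norm (\<gamma> (s n) ^ Suc n - exp (t *\<^sub>R X))
      \<le> \<bar>t\<bar> * exp (\<bar>t\<bar> * (norm X + 1)) * norm (h (s n) /\<^sub>R s n)) sequentially"
  proof (rule eventually_mono)
    fix n assume "norm (h (s n) /\<^sub>R s n) < 1"
    then have "norm (h (s n)) \<le> \<bar>s n\<bar>"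
      unfolding hn by (simp add: mult_left_le)
    from norm_power_sub_exp_le[of "s n" X "\<gamma> (s n)" n, folded h_def, OF this]
    show "norm (\<gamma> (s n) ^ Suc n - exp (t *\<^sub>R X)) \<le> \<bar>t\<bar> * exp (\<bar>t\<bar> * (norm X + 1)) * norm (h (s n) /\<^sub>R s n)"
      unfolding hn using False by (simp add: s_def abs_mult ac_simps)
  qed
  then have "(\<lambda>n. \<gamma> (s n) ^ Suc n - exp (t *\<^sub>R X)) \<longlonglongrightarrow> 0"
    by (rule Lim_null_comparison) (intro tendsto_mult_right_zero tendsto_norm_zero hs)
  then show ?thesis by (simp add: s_def LIM_zero_iff)
qed (simp add: \<gamma>0)

lemma norm_inverse_diff_le:
  fixes a a' b b' :: "'a::real_normed_algebra_1"
  assumes b: "b' * b = 1" and a: "a * a' = 1" and small: "norm (b - a) * norm a' \<le> 1 / 2"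
  shows "norm (b' - a') \<le> 2 * norm a' ^ 2 * norm (b - a)"
proof -
  have "b' * (b - a) * a' = (b' * b) * a' - b' * (a * a')"
    by (simp add: algebra_simps)
  then have "norm (b' - a') = norm (b' * (b - a) * a')"
    using a b by (simp add: norm_minus_commute)
  also have "\<dots> \<le> norm b' * norm (b - a) * norm a'"
    by (meson mult_right_mono norm_ge_zero norm_mult_ineq order_trans)
  finally have diff: "norm (b' - a') \<le> norm b' * (norm (b - a) * norm a')"
    by (simp add: mult.assoc)
  have "norm b' \<le> norm a' + norm (b' - a')"
    by (rule norm_triangle_sub)
  also have "\<dots> \<le> norm a' + norm b' / 2"
    using diff mult_left_mono[OF small norm_ge_zero, of b'] by simp
  finally have "norm b' \<le> 2 * norm a'" by simp
  with diff have "norm (b' - a') \<le> (2 * norm a') * (norm (b - a) * norm a')"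
    by (meson mult_right_mono mult_nonneg_nonneg norm_ge_zero order_trans)
  then show ?thesis by (simp add: power2_eq_square ac_simps)
qed

lemma tendsto_two_sided_inverse:
  fixes b b' :: "real \<Rightarrow> 'a::real_normed_algebra_1"
  assumes l: "\<And>s. b' s * b s = 1" and r: "\<And>s. b s * b' s = 1"
    and b: "(b \<longlongrightarrow> b x) (at x)"
  shows "(b' \<longlongrightarrow> b' x) (at x)"
proof -
  have nb: "((\<lambda>s. norm (b s - b x)) \<longlongrightarrow> 0) (at x)"
    using b by (simp add: LIM_zero_iff tendsto_norm_zero)
  have "((\<lambda>s. norm (b s - b x) * norm (b' x)) \<longlongrightarrow> 0) (at x)"
    using tendsto_mult_left_zero[OF nb] .
  from order_tendstoD(2)[OF this, of "1 / 2"]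
  have "eventually (\<lambda>s. norm (b s - b x) * norm (b' x) \<le> 1 / 2) (at x)"
    by (auto elim: eventually_mono)
  then have "eventually (\<lambda>s. norm (b' s - b' x) \<le> 2 * norm (b' x) ^ 2 * norm (b s - b x)) (at x)"
    by (rule eventually_mono) (rule norm_inverse_diff_le[OF l r])
  then have "((\<lambda>s. b' s - b' x) \<longlongrightarrow> 0) (at x)"
    by (rule Lim_null_comparison) (intro tendsto_mult_right_zero nb)
  then show ?thesis by (simp add: LIM_zero_iff)
qed

lemma has_vector_derivative_two_sided_inverse:
  fixes b b' :: "real \<Rightarrow> 'a::real_normed_algebra_1"
  assumes l: "\<And>s. b' s * b s = 1" and r: "\<And>s. b s * b' s = 1"
    and b: "(b has_vector_derivative D) (at x)"
  shows "(b' has_vector_derivative - (b' x * D * b' x)) (at x)"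
proof -
  have "continuous (at x) b"
    using b by (meson differentiableI_vector differentiable_imp_continuous_within)
  then have b'_cont: "(b' \<longlongrightarrow> b' x) (at x)"
    by (intro tendsto_two_sided_inverse[OF l r]) (simp add: continuous_at)
  have q: "((\<lambda>y. (b y - b x) /\<^sub>R (y - x)) \<longlongrightarrow> D) (at x)"
    using b has_vector_derivative_iff_difference_quotient by blast
  have "(b' y - b' x) /\<^sub>R (y - x) = - (b' y * ((b y - b x) /\<^sub>R (y - x)) * b' x)" for y
  proof -
    have "b' y - b' x = b' y * (b x * b' x) - (b' y * b y) * b' x" using l r by simp
    also have "\<dots> = - (b' y * (b y - b x) * b' x)" by (simp add: algebra_simps)
    finally show ?thesis by (simp add: scaleR_minus_right mult_scaleR_right mult_scaleR_left)
  qed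
  moreover have "((\<lambda>y. - (b' y * ((b y - b x) /\<^sub>R (y - x)) * b' x)) \<longlongrightarrow> - (b' x * D * b' x)) (at x)"
    by (intro tendsto_minus tendsto_mult b'_cont q tendsto_const)
  ultimately show ?thesis by (simp add: has_vector_derivative_iff_difference_quotient)
qed

section \<open>Matrix Lie groups and their Lie algebras\<close>

lemma mexp_eq_exp: "mexp A = to_cmat (exp (of_cmat A))"
proof -
  have "(\<lambda>n. of_cmat A ^ n /\<^sub>R fact n) sums exp (of_cmat A)"
    unfolding exp_def by (rule summable_sums[OF summable_exp_generic])
  from bounded_linear.sums[OF bounded_linear_to_cmat this]
  have "(\<lambda>n. (1 / fact n) *\<^sub>R matpow A n) sums to_cmat (exp (of_cmat A))"
    by (simp add: to_cmat_scaleR to_cmat_power of_cmat_inverse divide_inverse)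
  then show ?thesis unfolding mexp_def by (rule sums_unique[symmetric])
qed

lemma mexp_zero: "mexp 0 = mat 1"
  by (simp add: mexp_eq_exp zero_mat_alg.abs_eq[symmetric] to_cmat_one)

lemma invertible_mexp: "invertible (mexp A)"
  unfolding invertible_def mexp_eq_exp
  by (rule exI[of _ "to_cmat (exp (- of_cmat A))"])
    (simp add: to_cmat_one flip: to_cmat_mult exp_add_commuting)

lemma matrix_inv_left_right:
  assumes "invertible (A :: 'a::semiring_1^'n^'n)"
  shows "matrix_inv A ** A = mat 1" "A ** matrix_inv A = mat 1"
  using someI_ex[OF assms[unfolded invertible_def]] unfolding matrix_inv_def by blast+

lemma matrix_inv_mult_cancel_left:
  assumes "invertible (A :: 'a::semiring_1^'n^'n)"
  shows "matrix_inv A ** X = matrix_inv A ** Y \<longleftrightarrow> X = Y"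
  by (metis assms matrix_inv_left_right(2) matrix_mul_assoc matrix_mul_lid)

lemma has_vector_derivative_matrix_inv:
  fixes \<gamma> :: "real \<Rightarrow> 'k::finite cmat"
  assumes inv: "\<And>s. invertible (\<gamma> s)" and \<gamma>': "(\<gamma> has_vector_derivative D) (at x)"
  shows "((\<lambda>s. matrix_inv (\<gamma> s)) has_vector_derivative
           - (matrix_inv (\<gamma> x) ** D ** matrix_inv (\<gamma> x))) (at x)"
proof -
  have "of_cmat (matrix_inv (\<gamma> s)) * of_cmat (\<gamma> s) = 1" "of_cmat (\<gamma> s) * of_cmat (matrix_inv (\<gamma> s)) = 1"
    for s by (simp_all add: matrix_inv_left_right[OF inv] of_cmat_one flip: of_cmat_mult)
  from has_vector_derivative_two_sided_inverse[OF this
      bounded_linear.has_vector_derivative[OF bounded_linear_of_cmat \<gamma>']]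
  show ?thesis
    using bounded_linear.has_vector_derivative[OF bounded_linear_to_cmat]
    by (fastforce simp: of_cmat_inverse to_cmat_mult to_cmat_minus)
qed

lemma matpow_in_group:
  assumes "matrix_lie_group G" "g \<in> G" shows "matpow g n \<in> G"
  using assms by (induction n) (auto simp: matrix_lie_group_def)

text \<open>This is where closedness of G is used: mexp (t X) is a limit of powers of the curve.\<close>

lemma tangent_in_lie_alg:
  fixes G :: "'k::finite cmat set"
  assumes G: "matrix_lie_group G" and \<gamma>G: "\<And>t. \<gamma> t \<in> G" and \<gamma>0: "\<gamma> 0 = mat 1"
    and \<gamma>': "(\<gamma> has_vector_derivative X) (at 0)"
  shows "X \<in> lie_alg G"
  unfolding lie_alg_def
proof (intro CollectI allI)
  fix t :: real
  have "((\<lambda>s. of_cmat (\<gamma> s)) has_vector_derivative of_cmat X) (at 0)"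
    by (rule bounded_linear.has_vector_derivative[OF bounded_linear_of_cmat \<gamma>'])
  from power_curve_tendsto_exp[OF _ this, of t] \<gamma>0
  have "(\<lambda>n. of_cmat (\<gamma> (t / real (Suc n))) ^ Suc n) \<longlonglongrightarrow> exp (t *\<^sub>R of_cmat X)"
    by (simp add: of_cmat_one)
  from bounded_linear.tendsto[OF bounded_linear_to_cmat this]
  have lim: "(\<lambda>n. matpow (\<gamma> (t / real (Suc n))) (Suc n)) \<longlonglongrightarrow> mexp (t *\<^sub>R X)"
    by (simp only: to_cmat_power of_cmat_inverse UNIV_I mexp_eq_exp of_cmat_scaleR)
  obtain T where T: "closed T" "G = {A. invertible A} \<inter> T"
    using G unfolding matrix_lie_group_def closedin_closed by blast
  have "\<And>n. matpow (\<gamma> (t / real (Suc n))) (Suc n) \<in> T"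
    using matpow_in_group[OF G \<gamma>G] T by blast
  from closed_sequentially[OF T(1) this lim]
  show "mexp (t *\<^sub>R X) \<in> G" using T invertible_mexp by blast
qed

lemma lie_alg_zero: "matrix_lie_group G \<Longrightarrow> 0 \<in> lie_alg G"
  by (simp add: lie_alg_def mexp_zero matrix_lie_group_def)

lemma lie_alg_scaleR: "X \<in> lie_alg G \<Longrightarrow> c *\<^sub>R X \<in> lie_alg G"
  unfolding lie_alg_def by (simp add: scaleR_scaleR)

lemma lie_alg_add:
  fixes G :: "'k::finite cmat set"
  assumes G: "matrix_lie_group G" and X: "X \<in> lie_alg G" and Y: "Y \<in> lie_alg G"
  shows "X + Y \<in> lie_alg G"
proof (rule tangent_in_lie_alg[OF G])
  let ?X = "of_cmat X" and ?Y = "of_cmat Y"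
  show "mexp (t *\<^sub>R X) ** mexp (t *\<^sub>R Y) \<in> G" for t
    using X Y G unfolding lie_alg_def matrix_lie_group_def by blast
  show "mexp (0 *\<^sub>R X) ** mexp (0 *\<^sub>R Y) = mat 1" by (simp add: mexp_zero)
  have "((\<lambda>t. exp (t *\<^sub>R ?X) * exp (t *\<^sub>R ?Y)) has_vector_derivative
      exp (0 *\<^sub>R ?X) * (exp (0 *\<^sub>R ?Y) * ?Y) + (exp (0 *\<^sub>R ?X) * ?X) * exp (0 *\<^sub>R ?Y)) (at 0)"
    by (intro has_vector_derivative_mult exp_scaleR_has_vector_derivative_right)
  from bounded_linear.has_vector_derivative[OF bounded_linear_to_cmat this]
  show "((\<lambda>t. mexp (t *\<^sub>R X) ** mexp (t *\<^sub>R Y)) has_vector_derivative X + Y) (at 0)"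
    by (simp add: mexp_eq_exp to_cmat_mult to_cmat_add of_cmat_inverse of_cmat_scaleR add.commute)
qed

lemma lie_alg_sum:
  assumes G: "matrix_lie_group G" and "finite I" and "\<And>i. i \<in> I \<Longrightarrow> f i \<in> lie_alg G"
  shows "(\<Sum>i\<in>I. f i) \<in> lie_alg G"
  using assms(2,3) by (induction I rule: finite_induct) (auto intro: lie_alg_add[OF G] lie_alg_zero[OF G])

section \<open>Differential functions on jet space\<close>

lemma relevant_mono: "relevant m N c \<Longrightarrow> N \<le> N' \<Longrightarrow> relevant m N' c"
  by (cases c) auto

lemma relevant_Th_iff: "relevant m N (Th n a b) \<longleftrightarrow> (n, a, b) \<in> thcoords m N"
  by (simp add: thcoords_def)

lemma finite_thcoords: "finite (thcoords m N)"
  by (rule finite_subset[of _ "{1..m} \<times> {0..N} \<times> {0..N}"]) (auto simp: thcoords_def)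

lemma thcoords_mono: "N \<le> N' \<Longrightarrow> thcoords m N \<subseteq> thcoords m N'"
  by (auto simp: thcoords_def)

lemma depends_only_mono: "depends_only m N f \<Longrightarrow> N \<le> N' \<Longrightarrow> depends_only m N' f"
  unfolding depends_only_def by (meson relevant_mono)

lemma ord_le: "depends_only m N f \<Longrightarrow> ord m f \<le> N"
  unfolding ord_def by (rule Least_le)

lemma depends_only_ord: "depends_only m N f \<Longrightarrow> depends_only m (ord m f) f"
  unfolding ord_def by (rule LeastI)

lemma depends_only_fun_upd:
  "depends_only m N f \<Longrightarrow> \<not> relevant m N c \<Longrightarrow> f (p(c := t)) = f p"
  unfolding depends_only_def by (metis fun_upd_other)

lemma pd_eq_0_if_not_relevant: "depends_only m N f \<Longrightarrow> \<not> relevant m N c \<Longrightarrow> pd c f p = 0"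
  unfolding pd_def by (simp add: depends_only_fun_upd)

lemma depends_only_pd: "depends_only m N f \<Longrightarrow> depends_only m N (pd c f)"
  unfolding depends_only_def
proof (intro allI impI)
  fix p q :: jet
  assume f: "\<forall>p q. (\<forall>c. relevant m N c \<longrightarrow> p c = q c) \<longrightarrow> f p = f q"
    and pq: "\<forall>c. relevant m N c \<longrightarrow> p c = q c"
  show "pd c f p = pd c f q"
  proof (cases "relevant m N c")
    case True
    have "(\<lambda>t. f (p(c := t))) = (\<lambda>t. f (q(c := t)))"
      using f pq by (intro ext) (metis fun_upd_apply)
    then show ?thesis unfolding pd_def using True pq by simp
  next
    case False
    then show ?thesis using f by (simp add: pd_def depends_only_def[symmetric] depends_only_fun_upd)
  qed
qed

lemma depends_only_comp2:
  "depends_only m N f \<Longrightarrow> depends_only m N g \<Longrightarrow> depends_only m N (\<lambda>p. h (f p) (g p))"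
  unfolding depends_only_def by (metis (no_types))

lemma depends_only_comp: "depends_only m N f \<Longrightarrow> depends_only m N (\<lambda>p. h (f p))"
  unfolding depends_only_def by metis

lemma depends_only_coord: "relevant m N c \<Longrightarrow> depends_only m N (\<lambda>p. p c)"
  unfolding depends_only_def by simp

lemma depends_only_sum:
  assumes "\<And>i. i \<in> I \<Longrightarrow> depends_only m N (f i)"
  shows "depends_only m N (\<lambda>p. \<Sum>i\<in>I. f i p)"
  using assms unfolding depends_only_def by (metis (mono_tags, lifting) sum.cong)

lemma diff_fun_common_order:
  assumes "diff_fun m f" "diff_fun m g"
  obtains N where "depends_only m N f" "depends_only m N g"
  using assms unfolding diff_fun_def by (metis depends_only_mono max.cobounded1 max.cobounded2)

definition coord_differentiable :: "(jet \<Rightarrow> 'v::real_normed_vector) \<Rightarrow> bool" where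
  "coord_differentiable f \<longleftrightarrow> (\<forall>c p. (\<lambda>t. f (p(c := t))) differentiable (at (p c)))"

lemma has_vector_derivative_pd:
  "coord_differentiable f \<Longrightarrow> ((\<lambda>t. f (p(c := t))) has_vector_derivative pd c f p) (at (p c))"
  unfolding coord_differentiable_def pd_def using vector_derivative_works by blast

lemma pd_eqI:
  assumes "\<And>p. ((\<lambda>t. f (p(c := t))) has_vector_derivative D p) (at (p c))"
  shows "pd c f = D"
  using assms unfolding pd_def by (intro ext) (rule vector_derivative_at)

lemma coord_differentiableI:
  assumes "\<And>c p. ((\<lambda>t. f (p(c := t))) has_vector_derivative D c p) (at (p c))"
  shows "coord_differentiable f"
  using assms unfolding coord_differentiable_def by (meson differentiableI_vector)

lemma pd_linear:
  assumes "bounded_linear L" "coord_differentiable f"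
  shows "pd c (\<lambda>q. L (f q)) = (\<lambda>q. L (pd c f q))"
  by (rule pd_eqI) (rule bounded_linear.has_vector_derivative[OF assms(1) has_vector_derivative_pd[OF assms(2)]])

lemma pd_bilinear:
  assumes P: "bounded_bilinear P" and f: "coord_differentiable f" and g: "coord_differentiable g"
  shows "pd c (\<lambda>q. P (f q) (g q)) = (\<lambda>q. P (f q) (pd c g q) + P (pd c f q) (g q))"
proof (rule pd_eqI)
  fix p
  from bounded_bilinear.has_vector_derivative[OF P has_vector_derivative_pd[OF f, of p c]
      has_vector_derivative_pd[OF g, of p c]]
  show "((\<lambda>t. P (f (p(c := t))) (g (p(c := t)))) has_vector_derivative
      P (f p) (pd c g p) + P (pd c f p) (g p)) (at (p c))" by simp
qed

lemma coord_differentiable_bilinear: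
  assumes P: "bounded_bilinear P" and f: "coord_differentiable f" and g: "coord_differentiable g"
  shows "coord_differentiable (\<lambda>q. P (f q) (g q))"
  by (rule coord_differentiableI)
    (rule bounded_bilinear.has_vector_derivative[OF P has_vector_derivative_pd[OF f]
        has_vector_derivative_pd[OF g]])

lemma pd_add:
  "coord_differentiable f \<Longrightarrow> coord_differentiable g \<Longrightarrow> pd c (\<lambda>q. f q + g q) = (\<lambda>q. pd c f q + pd c g q)"
  by (rule pd_eqI) (rule has_vector_derivative_add[OF has_vector_derivative_pd has_vector_derivative_pd])

lemma coord_differentiable_add:
  "coord_differentiable f \<Longrightarrow> coord_differentiable g \<Longrightarrow> coord_differentiable (\<lambda>q. f q + g q)"
  by (rule coord_differentiableI)
    (rule has_vector_derivative_add[OF has_vector_derivative_pd has_vector_derivative_pd])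

lemma pd_diff:
  "coord_differentiable f \<Longrightarrow> coord_differentiable g \<Longrightarrow> pd c (\<lambda>q. f q - g q) = (\<lambda>q. pd c f q - pd c g q)"
  by (rule pd_eqI) (rule has_vector_derivative_diff[OF has_vector_derivative_pd has_vector_derivative_pd])

lemma pd_sum:
  "(\<And>i. i \<in> I \<Longrightarrow> coord_differentiable (f i)) \<Longrightarrow>
    pd c (\<lambda>q. \<Sum>i\<in>I. f i q) = (\<lambda>q. \<Sum>i\<in>I. pd c (f i) q)"
  by (rule pd_eqI) (rule has_vector_derivative_sum, rule has_vector_derivative_pd)

lemma pd_const: "pd c (\<lambda>q. k) = (\<lambda>q. 0)"
  by (rule pd_eqI) simp

lemma fun_upd_line_apply: "(\<lambda>t. (p(c := t)) c') = (if c = c' then (\<lambda>t. t) else (\<lambda>t. p c'))"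
  by auto

lemma pd_coord: "pd c (\<lambda>q. q c') = (\<lambda>q. if c = c' then 1 else 0)"
  by (rule pd_eqI) (simp add: fun_upd_line_apply)

lemma coord_differentiable_coord: "coord_differentiable (\<lambda>q. q c')"
  unfolding coord_differentiable_def fun_upd_line_apply by (auto intro: differentiable_const differentiable_ident)

lemma pd_matrix_inv:
  fixes \<Phi> :: "jet \<Rightarrow> 'k::finite cmat"
  assumes "coord_differentiable \<Phi>" "\<And>p. invertible (\<Phi> p)"
  shows "pd c (\<lambda>q. matrix_inv (\<Phi> q)) = (\<lambda>q. - (matrix_inv (\<Phi> q) ** pd c \<Phi> q ** matrix_inv (\<Phi> q)))"
  using has_vector_derivative_matrix_inv[OF assms(2) has_vector_derivative_pd[OF assms(1)]]
  by (intro pd_eqI) simp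

lemma coord_differentiable_matrix_inv:
  fixes \<Phi> :: "jet \<Rightarrow> 'k::finite cmat"
  assumes "coord_differentiable \<Phi>" "\<And>p. invertible (\<Phi> p)"
  shows "coord_differentiable (\<lambda>q. matrix_inv (\<Phi> q))"
  by (rule coord_differentiableI)
    (rule has_vector_derivative_matrix_inv[OF assms(2) has_vector_derivative_pd[OF assms(1)]])

lemma matrix_inv_mult_pd_in_lie_alg:
  fixes \<Phi> :: "jet \<Rightarrow> 'k::finite cmat"
  assumes G: "matrix_lie_group G" and \<Phi>G: "\<And>p. \<Phi> p \<in> G" and \<Phi>: "coord_differentiable \<Phi>"
  shows "matrix_inv (\<Phi> p) ** pd c \<Phi> p \<in> lie_alg G"
proof (rule tangent_in_lie_alg[OF G])
  have inv: "invertible (\<Phi> p)" using G \<Phi>G unfolding matrix_lie_group_def by blast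
  show "matrix_inv (\<Phi> p) ** \<Phi> (p(c := p c + s)) \<in> G" for s
    using G \<Phi>G unfolding matrix_lie_group_def by blast
  show "matrix_inv (\<Phi> p) ** \<Phi> (p(c := p c + 0)) = mat 1"
    by (simp add: matrix_inv_left_right[OF inv])
  have "((\<lambda>s. p c + s) has_vector_derivative 1) (at 0)"
    by (auto intro!: derivative_eq_intros)
  from vector_diff_chain_at[OF this] has_vector_derivative_pd[OF \<Phi>, of p c]
  have "((\<lambda>s. \<Phi> (p(c := p c + s))) has_vector_derivative pd c \<Phi> p) (at 0)"
    by (simp add: o_def)
  from bounded_linear.has_vector_derivative[OF
      bounded_bilinear.bounded_linear_right[OF bounded_bilinear_matrix_mult] this]
  show "((\<lambda>s. matrix_inv (\<Phi> p) ** \<Phi> (p(c := p c + s))) has_vector_derivative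
      matrix_inv (\<Phi> p) ** pd c \<Phi> p) (at 0)" .
qed

lemma ipd_snoc: "ipd (cs @ [c]) f = ipd cs (pd c f)"
  by (induction cs) auto

lemma smooth_jet_iff:
  "smooth_jet f \<longleftrightarrow> continuous_on UNIV f \<and> coord_differentiable f \<and> (\<forall>c. smooth_jet (pd c f))"
proof
  assume s: "smooth_jet f"
  have "continuous_on UNIV (ipd [] f)" "\<forall>c p. (\<lambda>t. ipd [] f (p(c := t))) differentiable at (p c)"
    using s unfolding smooth_jet_def by blast+
  moreover have "smooth_jet (pd c f)" for c
    using s unfolding smooth_jet_def by (metis ipd_snoc)
  ultimately show "continuous_on UNIV f \<and> coord_differentiable f \<and> (\<forall>c. smooth_jet (pd c f))"
    by (auto simp: coord_differentiable_def)
next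
  assume a: "continuous_on UNIV f \<and> coord_differentiable f \<and> (\<forall>c. smooth_jet (pd c f))"
  show "smooth_jet f" unfolding smooth_jet_def
  proof (intro conjI allI)
    fix cs
    show "continuous_on UNIV (ipd cs f)"
    proof (cases cs rule: rev_exhaust)
      case Nil then show ?thesis using a by simp
    next
      case (snoc cs' c) then show ?thesis using a by (simp add: ipd_snoc smooth_jet_def)
    qed
    fix c p
    show "(\<lambda>t. ipd cs f (p(c := t))) differentiable at (p c)"
    proof (cases cs rule: rev_exhaust)
      case Nil then show ?thesis using a by (simp add: coord_differentiable_def)
    next
      case (snoc cs' c') then show ?thesis using a by (simp add: ipd_snoc smooth_jet_def)
    qed
  qed
qed

definition smooth_upto :: "nat \<Rightarrow> (jet \<Rightarrow> 'v::real_normed_vector) \<Rightarrow> bool" where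
  "smooth_upto n f \<longleftrightarrow> (\<forall>cs. length cs \<le> n \<longrightarrow> continuous_on UNIV (ipd cs f) \<and> coord_differentiable (ipd cs f))"

lemma smooth_jet_iff_smooth_upto: "smooth_jet f \<longleftrightarrow> (\<forall>n. smooth_upto n f)"
  unfolding smooth_jet_def smooth_upto_def coord_differentiable_def by blast

lemma smooth_upto_SucD: "smooth_upto (Suc n) f \<Longrightarrow> smooth_upto n f"
  unfolding smooth_upto_def by auto

lemma smooth_upto_pd: "smooth_upto (Suc n) f \<Longrightarrow> smooth_upto n (pd c f)"
  unfolding smooth_upto_def by (metis ipd_snoc length_append_singleton not_less_eq_eq)

lemma smooth_upto_imp_C1: "smooth_upto n f \<Longrightarrow> continuous_on UNIV f \<and> coord_differentiable f"
  unfolding smooth_upto_def by (metis ipd.simps(1) le0 list.size(3))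

lemma ipd_add:
  assumes "smooth_upto n f" "smooth_upto n g" "length cs \<le> n"
  shows "ipd cs (\<lambda>q. f q + g q) = (\<lambda>q. ipd cs f q + ipd cs g q)"
  using assms(3)
proof (induction cs)
  case Nil then show ?case by simp
next
  case (Cons c cs)
  then have "length cs \<le> n" by simp
  then have "coord_differentiable (ipd cs f)" "coord_differentiable (ipd cs g)" using assms unfolding smooth_upto_def by auto
  then show ?case using Cons by (simp add: pd_add)
qed

lemma smooth_upto_add:
  assumes "smooth_upto n f" "smooth_upto n g"
  shows "smooth_upto n (\<lambda>q. f q + g q)"
  unfolding smooth_upto_def
proof (intro allI impI)
  fix cs :: "jc list" assume l: "length cs \<le> n"
  have "continuous_on UNIV (ipd cs f)" "continuous_on UNIV (ipd cs g)" "coord_differentiable (ipd cs f)" "coord_differentiable (ipd cs g)"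
    using assms l unfolding smooth_upto_def by auto
  then show "continuous_on UNIV (ipd cs (\<lambda>q. f q + g q)) \<and> coord_differentiable (ipd cs (\<lambda>q. f q + g q))"
    unfolding ipd_add[OF assms l] by (auto intro: continuous_on_add coord_differentiable_add)
qed

lemma smooth_upto_bilinear:
  assumes P: "bounded_bilinear P"
  shows "smooth_upto n f \<Longrightarrow> smooth_upto n g \<Longrightarrow> smooth_upto n (\<lambda>q. P (f q) (g q))"
proof (induction n arbitrary: f g)
  case 0
  then have "continuous_on UNIV f" "coord_differentiable f" "continuous_on UNIV g" "coord_differentiable g" using smooth_upto_imp_C1 by blast+
  then show ?case unfolding smooth_upto_def
    by (auto intro: bounded_bilinear.continuous_on[OF P] coord_differentiable_bilinear[OF P])
next
  case (Suc n)
  have f: "continuous_on UNIV f" "coord_differentiable f" and g: "continuous_on UNIV g" "coord_differentiable g"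
    using smooth_upto_imp_C1 Suc.prems by blast+
  show ?case unfolding smooth_upto_def
  proof (intro allI impI)
    fix cs :: "jc list" assume l: "length cs \<le> Suc n"
    show "continuous_on UNIV (ipd cs (\<lambda>q. P (f q) (g q))) \<and> coord_differentiable (ipd cs (\<lambda>q. P (f q) (g q)))"
    proof (cases cs rule: rev_exhaust)
      case Nil then show ?thesis
        using f g by (auto intro: bounded_bilinear.continuous_on[OF P] coord_differentiable_bilinear[OF P])
    next
      case (snoc cs' c)
      have l': "length cs' \<le> n" using l snoc by simp
      have "smooth_upto n (\<lambda>q. P (f q) (pd c g q))"
        using Suc.IH[OF smooth_upto_SucD[OF Suc.prems(1)] smooth_upto_pd[OF Suc.prems(2)]] .
      moreover have "smooth_upto n (\<lambda>q. P (pd c f q) (g q))"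
        using Suc.IH[OF smooth_upto_pd[OF Suc.prems(1)] smooth_upto_SucD[OF Suc.prems(2)]] .
      ultimately have "smooth_upto n (\<lambda>q. P (f q) (pd c g q) + P (pd c f q) (g q))" by (rule smooth_upto_add)
      then show ?thesis using l' unfolding snoc ipd_snoc pd_bilinear[OF P f(2) g(2)] smooth_upto_def by blast
    qed
  qed
qed

lemma smooth_jet_bilinear: "bounded_bilinear P \<Longrightarrow> smooth_jet f \<Longrightarrow> smooth_jet g \<Longrightarrow> smooth_jet (\<lambda>q. P (f q) (g q))"
  unfolding smooth_jet_iff_smooth_upto using smooth_upto_bilinear by blast

lemma smooth_jet_const: "smooth_jet (\<lambda>q. k)"
proof -
  have "ipd cs (\<lambda>q. k) = (if cs = [] then (\<lambda>q. k) else (\<lambda>q. 0))" for cs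
    by (induction cs) (auto simp: pd_const)
  then show ?thesis unfolding smooth_jet_def by simp
qed

lemma smooth_jet_linear:
  assumes L: "bounded_linear L" and f: "smooth_jet f"
  shows "smooth_jet (\<lambda>q. L (f q))"
proof -
  have "bounded_bilinear (\<lambda>x (t::real). t *\<^sub>R L x)"
    using bounded_bilinear.comp[OF bounded_bilinear.flip[OF bounded_bilinear_scaleR] L bounded_linear_ident]
    by simp
  from smooth_jet_bilinear[OF this f smooth_jet_const[of 1]] show ?thesis by simp
qed

lemma smooth_jet_add: "smooth_jet f \<Longrightarrow> smooth_jet g \<Longrightarrow> smooth_jet (\<lambda>q. f q + g q)"
  unfolding smooth_jet_iff_smooth_upto using smooth_upto_add by blast

lemma smooth_jet_pd: "smooth_jet f \<Longrightarrow> smooth_jet (pd c f)"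
  using smooth_jet_iff by blast

lemma smooth_jet_coord_differentiable: "smooth_jet f \<Longrightarrow> coord_differentiable f"
  using smooth_jet_iff by blast

lemma smooth_jet_continuous: "smooth_jet f \<Longrightarrow> continuous_on UNIV f"
  using smooth_jet_iff by blast

lemma smooth_jet_coord: "smooth_jet (\<lambda>q. q c)"
proof -
  have "smooth_jet (pd c' (\<lambda>q. q c))" for c'
    unfolding pd_coord by (cases "c' = c") (simp_all add: smooth_jet_const)
  then show ?thesis unfolding smooth_jet_iff[of "\<lambda>q. q c"] using coord_differentiable_coord by simp
qed

lemma smooth_jet_diff: "smooth_jet f \<Longrightarrow> smooth_jet g \<Longrightarrow> smooth_jet (\<lambda>q. f q - g q)"
proof -
  assume "smooth_jet f" "smooth_jet g"
  moreover have "bounded_linear (\<lambda>x::'a. - x)" by (rule bounded_linear_minus[OF bounded_linear_ident])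
  ultimately have "smooth_jet (\<lambda>q. f q + - g q)" using smooth_jet_add smooth_jet_linear by blast
  then show ?thesis by simp
qed

lemma smooth_jet_sum:
  assumes "finite I" "\<And>i. i \<in> I \<Longrightarrow> smooth_jet (f i)"
  shows "smooth_jet (\<lambda>q. \<Sum>i\<in>I. f i q)"
  using assms by (induction I rule: finite_induct) (auto intro: smooth_jet_add smooth_jet_const)

lemma continuous_on_coord_pair_near:
  fixes g :: "jet \<Rightarrow> real"
  assumes "continuous_on UNIV g" "e > 0"
  obtains d where "d > 0"
    "\<And>x y. \<bar>x - p c\<bar> < d \<Longrightarrow> \<bar>y - p c'\<bar> < d \<Longrightarrow> \<bar>g (p(c := x, c' := y)) - g p\<bar> < e"
proof -
  have "continuous_on UNIV (\<lambda>z. (p(c := fst z, c' := snd z)) i)" for i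
    by (cases "i = c'"; cases "i = c") (auto intro: continuous_intros)
  then have "continuous_on UNIV (\<lambda>z. p(c := fst z, c' := snd z))"
    by (rule continuous_on_coordinatewise_then_product)
  then have "isCont (\<lambda>z. g (p(c := fst z, c' := snd z))) (p c, p c')"
    using assms(1) continuous_on_compose2 continuous_on_eq_continuous_at by blast
  then obtain d where "d > 0"
    and d: "\<And>z. dist z (p c, p c') < d \<Longrightarrow> \<bar>g (p(c := fst z, c' := snd z)) - g p\<bar> < e"
    unfolding continuous_at_eps_delta using assms(2) by (auto simp: dist_real_def)
  have "dist (x, y) (p c, p c') < d" if "\<bar>x - p c\<bar> < d / 2" "\<bar>y - p c'\<bar> < d / 2" for x y
    using that sqrt_sum_squares_le_sum_abs[of "x - p c" "y - p c'"]
    by (simp add: dist_Pair_Pair dist_real_def)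
  then show thesis using that[of "d / 2"] \<open>d > 0\<close> d by force
qed

lemma second_difference_mvt:
  fixes f :: "jet \<Rightarrow> real"
  assumes f: "smooth_jet f" and cc': "c \<noteq> c'" and r: "r > 0"
  obtains \<xi> \<eta> where "s < \<xi>" "\<xi> < s + r" "t < \<eta>" "\<eta> < t + r"
    "f (p(c := s + r, c' := t + r)) - f (p(c := s + r, c' := t))
       - f (p(c := s, c' := t + r)) + f (p(c := s, c' := t))
     = r * (r * pd c' (pd c f) (p(c := \<xi>, c' := \<eta>)))"
proof -
  define P where "P x y = p(c := x, c' := y)" for x y
  have line_c: "DERIV (\<lambda>x. g (P x y)) x :> pd c g (P x y)" if "smooth_jet g" for g :: "jet \<Rightarrow> real" and x y
    using has_vector_derivative_pd[OF smooth_jet_coord_differentiable[OF that], of "P x y" c] cc'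
    by (simp add: P_def has_real_derivative_iff_has_vector_derivative fun_upd_twist)
  have line_c': "DERIV (\<lambda>y. g (P x y)) y :> pd c' g (P x y)" if "smooth_jet g" for g :: "jet \<Rightarrow> real" and x y
    using has_vector_derivative_pd[OF smooth_jet_coord_differentiable[OF that], of "P x y" c']
    by (simp add: P_def has_real_derivative_iff_has_vector_derivative)
  have "\<exists>\<xi>. s < \<xi> \<and> \<xi> < s + r \<and>
      (f (P (s + r) (t + r)) - f (P (s + r) t)) - (f (P s (t + r)) - f (P s t))
      = (s + r - s) * (pd c f (P \<xi> (t + r)) - pd c f (P \<xi> t))"
    using r by (intro MVT2) (auto intro!: derivative_intros line_c f)
  then obtain \<xi> where \<xi>: "s < \<xi>" "\<xi> < s + r" and
    "(f (P (s + r) (t + r)) - f (P (s + r) t)) - (f (P s (t + r)) - f (P s t))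
      = r * (pd c f (P \<xi> (t + r)) - pd c f (P \<xi> t))"
    by auto
  moreover have "\<exists>\<eta>. t < \<eta> \<and> \<eta> < t + r \<and>
      pd c f (P \<xi> (t + r)) - pd c f (P \<xi> t) = (t + r - t) * pd c' (pd c f) (P \<xi> \<eta>)"
    using r by (intro MVT2) (auto intro!: line_c' smooth_jet_pd f)
  ultimately show ?thesis using that by (auto simp: P_def algebra_simps)
qed

lemma pd_commute_real:
  fixes f :: "jet \<Rightarrow> real"
  assumes f: "smooth_jet f" and cc': "c \<noteq> c'"
  shows "pd c' (pd c f) p = pd c (pd c' f) p"
proof (rule ccontr)
  let ?f12 = "pd c' (pd c f)" and ?f21 = "pd c (pd c' f)"
  assume "?f12 p \<noteq> ?f21 p"
  define e where "e = \<bar>?f12 p - ?f21 p\<bar> / 2"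
  have "e > 0" using \<open>?f12 p \<noteq> ?f21 p\<close> by (simp add: e_def)
  have "continuous_on UNIV ?f12" "continuous_on UNIV ?f21"
    using f by (auto intro: smooth_jet_continuous smooth_jet_pd)
  obtain d1 where "d1 > 0" and d1: "\<And>x y. \<bar>x - p c\<bar> < d1 \<Longrightarrow> \<bar>y - p c'\<bar> < d1 \<Longrightarrow>
      \<bar>?f12 (p(c := x, c' := y)) - ?f12 p\<bar> < e"
    by (rule continuous_on_coord_pair_near[OF \<open>continuous_on UNIV ?f12\<close> \<open>e > 0\<close>, of p c c']) blast
  obtain d2 where "d2 > 0" and d2: "\<And>x y. \<bar>x - p c\<bar> < d2 \<Longrightarrow> \<bar>y - p c'\<bar> < d2 \<Longrightarrow>
      \<bar>?f21 (p(c := x, c' := y)) - ?f21 p\<bar> < e"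
    by (rule continuous_on_coord_pair_near[OF \<open>continuous_on UNIV ?f21\<close> \<open>e > 0\<close>, of p c c']) blast
  define r where "r = min d1 d2"
  have "r > 0" using \<open>d1 > 0\<close> \<open>d2 > 0\<close> by (simp add: r_def)
  obtain \<xi> \<eta> where \<xi>\<eta>: "p c < \<xi>" "\<xi> < p c + r" "p c' < \<eta>" "\<eta> < p c' + r" and
    eq12: "f (p(c := p c + r, c' := p c' + r)) - f (p(c := p c + r, c' := p c'))
      - f (p(c := p c, c' := p c' + r)) + f (p(c := p c, c' := p c'))
      = r * (r * ?f12 (p(c := \<xi>, c' := \<eta>)))"
    using second_difference_mvt[OF f cc' \<open>r > 0\<close>] by metis
  obtain \<eta>' \<xi>' where \<xi>\<eta>': "p c' < \<eta>'" "\<eta>' < p c' + r" "p c < \<xi>'" "\<xi>' < p c + r" and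
    eq21: "f (p(c := p c + r, c' := p c' + r)) - f (p(c := p c, c' := p c' + r))
      - f (p(c := p c + r, c' := p c')) + f (p(c := p c, c' := p c'))
      = r * (r * ?f21 (p(c := \<xi>', c' := \<eta>')))"
    using second_difference_mvt[OF f cc'[symmetric] \<open>r > 0\<close>, of "p c'" "p c" p]
    unfolding fun_upd_twist[OF cc'[symmetric]] by metis
  have "r * (r * ?f12 (p(c := \<xi>, c' := \<eta>))) = r * (r * ?f21 (p(c := \<xi>', c' := \<eta>')))"
    using eq12 eq21 by linarith
  with \<open>r > 0\<close> have "?f12 (p(c := \<xi>, c' := \<eta>)) = ?f21 (p(c := \<xi>', c' := \<eta>'))" by simp
  moreover have "\<bar>?f12 (p(c := \<xi>, c' := \<eta>)) - ?f12 p\<bar> < e" using \<xi>\<eta> by (intro d1) (auto simp: r_def)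
  moreover have "\<bar>?f21 (p(c := \<xi>', c' := \<eta>')) - ?f21 p\<bar> < e" using \<xi>\<eta>' by (intro d2) (auto simp: r_def)
  ultimately show False unfolding e_def by (simp add: abs_if split: if_split_asm)
qed

lemma pd_commute:
  fixes f :: "jet \<Rightarrow> 'v::euclidean_space"
  assumes f: "smooth_jet f"
  shows "pd c' (pd c f) = pd c (pd c' f)"
proof (cases "c = c'")
  case False
  show ?thesis
  proof (intro ext euclidean_eqI[where 'a='v])
    fix p and b :: 'v
    have L: "bounded_linear (\<lambda>x::'v. x \<bullet> b)" by (rule bounded_linear_inner_left)
    have "pd c' (pd c f) p \<bullet> b = pd c' (pd c (\<lambda>q. f q \<bullet> b)) p" for c c'
      using f by (simp add: pd_linear[OF L] smooth_jet_coord_differentiable smooth_jet_pd)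
    moreover have "pd c' (pd c (\<lambda>q. f q \<bullet> b)) p = pd c (pd c' (\<lambda>q. f q \<bullet> b)) p"
      by (rule pd_commute_real[OF smooth_jet_linear[OF L f] False])
    ultimately show "pd c' (pd c f) p \<bullet> b = pd c (pd c' f) p \<bullet> b" by metis
  qed
qed simp

section \<open>Total derivatives and prolongations\<close>

definition vfield :: "(jc \<Rightarrow> jet \<Rightarrow> real) \<Rightarrow> jc set \<Rightarrow> (jet \<Rightarrow> 'v::real_normed_vector) \<Rightarrow> jet \<Rightarrow> 'v" where
  "vfield w C f p = (\<Sum>c\<in>C. w c p *\<^sub>R pd c f p)"

lemma vfield_const: "vfield w C (\<lambda>q. k) p = 0"
  by (simp add: vfield_def pd_const)

lemma vfield_coord: "finite C \<Longrightarrow> vfield w C (\<lambda>q. q c) p = (if c \<in> C then w c p else 0)"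
  by (simp add: vfield_def pd_coord if_distrib if_distribR sum.delta' cong: if_cong)

lemma vfield_bilinear:
  assumes P: "bounded_bilinear P" and "coord_differentiable f" "coord_differentiable g"
  shows "vfield w C (\<lambda>q. P (f q) (g q)) p = P (f p) (vfield w C g p) + P (vfield w C f p) (g p)"
proof -
  interpret P: bounded_bilinear P by (rule P)
  show ?thesis
    unfolding vfield_def pd_bilinear[OF assms]
    by (simp add: P.sum_right P.sum_left P.scaleR_right P.scaleR_left scaleR_right_distrib sum.distrib)
qed

lemma vfield_add:
  "coord_differentiable f \<Longrightarrow> coord_differentiable g \<Longrightarrow>
    vfield w C (\<lambda>q. f q + g q) p = vfield w C f p + vfield w C g p"
  unfolding vfield_def by (simp add: pd_add scaleR_right_distrib sum.distrib)

lemma vfield_diff: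
  "coord_differentiable f \<Longrightarrow> coord_differentiable g \<Longrightarrow>
    vfield w C (\<lambda>q. f q - g q) p = vfield w C f p - vfield w C g p"
  unfolding vfield_def by (simp add: pd_diff scaleR_right_diff_distrib sum_subtractf)

lemma vfield_sum:
  "(\<And>i. i \<in> I \<Longrightarrow> coord_differentiable (f i)) \<Longrightarrow>
    vfield w C (\<lambda>q. \<Sum>i\<in>I. f i q) p = (\<Sum>i\<in>I. vfield w C (f i) p)"
  unfolding vfield_def by (simp add: pd_sum scaleR_sum_right sum.swap[of _ C])

lemma vfield_vfield:
  assumes v: "\<And>d. d \<in> D \<Longrightarrow> coord_differentiable (v d)"
    and f: "\<And>d. coord_differentiable (pd d f)"
  shows "vfield w C (vfield v D f) p =
     (\<Sum>c\<in>C. \<Sum>d\<in>D. (w c p * v d p) *\<^sub>R pd c (pd d f) p) + (\<Sum>d\<in>D. vfield w C (v d) p *\<^sub>R pd d f p)"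
proof -
  have "vfield v D f = (\<lambda>q. \<Sum>d\<in>D. v d q *\<^sub>R pd d f q)"
    by (simp add: vfield_def[abs_def])
  then have "vfield w C (vfield v D f) p = (\<Sum>d\<in>D. vfield w C (\<lambda>q. v d q *\<^sub>R pd d f q) p)"
    by (simp add: vfield_sum coord_differentiable_bilinear[OF bounded_bilinear_scaleR] v f)
  also have "\<dots> = (\<Sum>d\<in>D. v d p *\<^sub>R vfield w C (pd d f) p + vfield w C (v d) p *\<^sub>R pd d f p)"
    by (intro sum.cong refl vfield_bilinear[OF bounded_bilinear_scaleR v f])
  finally show ?thesis
    by (simp add: sum.distrib vfield_def scaleR_sum_right sum.swap[of _ C] mult.commute)
qed

text \<open>The second-order terms cancel by the symmetry of second partial derivatives.\<close>

lemma vfield_commutator: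
  fixes f :: "jet \<Rightarrow> 'v::euclidean_space"
  assumes "\<And>c. c \<in> C \<Longrightarrow> coord_differentiable (w c)"
    "\<And>d. d \<in> D \<Longrightarrow> coord_differentiable (v d)" and f: "smooth_jet f"
  shows "vfield w C (vfield v D f) p - vfield v D (vfield w C f) p =
     (\<Sum>d\<in>D. vfield w C (v d) p *\<^sub>R pd d f p) - (\<Sum>c\<in>C. vfield v D (w c) p *\<^sub>R pd c f p)"
proof -
  have "(\<Sum>c\<in>C. \<Sum>d\<in>D. (w c p * v d p) *\<^sub>R pd c (pd d f) p)
      = (\<Sum>d\<in>D. \<Sum>c\<in>C. (v d p * w c p) *\<^sub>R pd d (pd c f) p)"
    by (subst sum.swap) (simp add: pd_commute[OF f] mult.commute)
  moreover have "\<And>d. coord_differentiable (pd d f)"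
    using f by (auto intro: smooth_jet_coord_differentiable smooth_jet_pd)
  ultimately show ?thesis using assms by (simp add: vfield_vfield)
qed

lemma depends_only_vfield:
  "(\<And>c. c \<in> C \<Longrightarrow> depends_only m N (w c)) \<Longrightarrow> depends_only m N f \<Longrightarrow> depends_only m N (vfield w C f)"
  unfolding vfield_def[abs_def]
  by (intro depends_only_sum depends_only_comp2[where h=scaleR] depends_only_pd) auto

lemma smooth_jet_vfield:
  "finite C \<Longrightarrow> (\<And>c. c \<in> C \<Longrightarrow> smooth_jet (w c)) \<Longrightarrow> smooth_jet f \<Longrightarrow> smooth_jet (vfield w C f)"
  unfolding vfield_def[abs_def]
  by (intro smooth_jet_sum smooth_jet_bilinear[OF bounded_bilinear_scaleR] smooth_jet_pd) auto

text \<open>TD and prw are recovered as first-order operators (TD_eq_vfield, prw_eq_vfield):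
  td_coeff and prw_coeff are their coefficients at the coordinates td_coords and th_coords.\<close>

definition th_coords :: "nat \<Rightarrow> nat \<Rightarrow> jc set" where
  "th_coords m N = (\<lambda>(n, a, b). Th n a b) ` thcoords m N"

definition td_coords :: "nat \<Rightarrow> nat \<Rightarrow> nat \<Rightarrow> jc set" where
  "td_coords m \<alpha> N = insert (xc \<alpha>) (th_coords m N)"

definition td_coeff :: "nat \<Rightarrow> jc \<Rightarrow> jet \<Rightarrow> real" where
  "td_coeff \<alpha> c = (case c of Th n a b \<Rightarrow> (\<lambda>p. p (shift \<alpha> (n, a, b))) | _ \<Rightarrow> (\<lambda>p. 1))"

definition prw_coeff :: "nat \<Rightarrow> (nat \<Rightarrow> jet \<Rightarrow> real) \<Rightarrow> jc \<Rightarrow> jet \<Rightarrow> real" where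
  "prw_coeff m Q c = (case c of Th n a b \<Rightarrow> TDJ m a b (Q n) | _ \<Rightarrow> (\<lambda>p. 0))"

lemma finite_th_coords: "finite (th_coords m N)"
  by (simp add: th_coords_def finite_thcoords)

lemma finite_td_coords: "finite (td_coords m \<alpha> N)"
  by (simp add: td_coords_def finite_th_coords)

lemma Th_in_th_coords_iff: "Th n a b \<in> th_coords m N \<longleftrightarrow> n \<in> {1..m} \<and> a + b \<le> N"
  by (force simp: th_coords_def thcoords_def)

lemma th_coordsE:
  assumes "c \<in> th_coords m N"
  obtains n a b where "c = Th n a b" "n \<in> {1..m}" "a + b \<le> N"
  using assms by (auto simp: th_coords_def thcoords_def)

lemma th_coords_mono: "N \<le> N' \<Longrightarrow> th_coords m N \<subseteq> th_coords m N'"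
  unfolding th_coords_def using thcoords_mono by blast

lemma xc_cases: "xc \<alpha> = X1 \<or> xc \<alpha> = X2"
  by (cases \<alpha> rule: xc.cases) auto

lemma xc_notin_th_coords: "xc \<alpha> \<notin> th_coords m N"
  using xc_cases[of \<alpha>] by (auto simp: th_coords_def)

lemma sum_td_coords: "(\<Sum>c\<in>td_coords m \<alpha> N. F c) = F (xc \<alpha>) + (\<Sum>c\<in>th_coords m N. F c)"
  by (simp add: td_coords_def finite_th_coords xc_notin_th_coords)

lemma td_coeff_xc: "td_coeff \<alpha> (xc \<alpha>) = (\<lambda>p. 1)"
  using xc_cases[of \<alpha>] by (auto simp: td_coeff_def)

lemma sum_thcoords_eq_th_coords:
  "(\<Sum>(n, a, b) \<in> thcoords m N. F (Th n a b)) = (\<Sum>c\<in>th_coords m N. F c)"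
  unfolding th_coords_def by (subst sum.reindex) (auto simp: inj_on_def case_prod_beta)

lemma sum_thcoords_ord:
  assumes "depends_only m N f"
  shows "(\<Sum>(n, a, b) \<in> thcoords m (ord m f). k n a b *\<^sub>R pd (Th n a b) f p)
       = (\<Sum>(n, a, b) \<in> thcoords m N. k n a b *\<^sub>R pd (Th n a b) f p)"
proof (rule sum.mono_neutral_left[OF finite_thcoords thcoords_mono[OF ord_le[OF assms]]])
  show "\<forall>i\<in>thcoords m N - thcoords m (ord m f). (case i of (n, a, b) \<Rightarrow> k n a b *\<^sub>R pd (Th n a b) f p) = 0"
    using pd_eq_0_if_not_relevant[OF depends_only_ord[OF assms]] relevant_Th_iff by fastforce
qed

lemma TD_eq_vfield:
  assumes "depends_only m N f"
  shows "TD m \<alpha> f = vfield (td_coeff \<alpha>) (td_coords m \<alpha> N) f"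
  unfolding TD_def vfield_def sum_thcoords_ord[OF assms] sum_td_coords td_coeff_xc
  by (intro ext) (simp add: td_coeff_def flip: sum_thcoords_eq_th_coords)

lemma prw_eq_vfield:
  assumes "depends_only m N f"
  shows "prw m Q f = vfield (prw_coeff m Q) (th_coords m N) f"
  unfolding prw_def vfield_def sum_thcoords_ord[OF assms]
  by (intro ext) (simp add: prw_coeff_def flip: sum_thcoords_eq_th_coords)

lemma smooth_jet_td_coeff: "smooth_jet (td_coeff \<alpha> c)"
  by (cases c) (simp_all add: td_coeff_def smooth_jet_coord smooth_jet_const)

lemma depends_only_td_coeff: "c \<in> td_coords m \<alpha> N \<Longrightarrow> depends_only m (Suc N) (td_coeff \<alpha> c)"
  using xc_cases[of \<alpha>]
  by (cases \<alpha> rule: xc.cases)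
    (auto simp: td_coords_def th_coords_def thcoords_def td_coeff_def depends_only_def)

lemma depends_only_TD:
  assumes "depends_only m N f"
  shows "depends_only m (Suc N) (TD m \<alpha> f)"
  unfolding TD_eq_vfield[OF assms]
  by (rule depends_only_vfield[OF depends_only_td_coeff depends_only_mono[OF assms]]) simp_all

lemma diff_fun_TD:
  assumes "diff_fun m f"
  shows "diff_fun m (TD m \<alpha> f)"
proof -
  obtain N where N: "depends_only m N f" and "smooth_jet f" using assms by (auto simp: diff_fun_def)
  then have "smooth_jet (TD m \<alpha> f)"
    unfolding TD_eq_vfield[OF N] by (intro smooth_jet_vfield finite_td_coords smooth_jet_td_coeff)
  then show ?thesis using depends_only_TD[OF N] by (auto simp: diff_fun_def)
qed

lemma depends_only_TDJ: "depends_only m N g \<Longrightarrow> depends_only m (N + b + a) (TDJ m a b g)"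
proof -
  assume g: "depends_only m N g"
  have "depends_only m (N + b) ((TD m 2 ^^ b) g)"
    by (induction b) (simp_all add: g depends_only_TD)
  then show ?thesis unfolding TDJ_def by (induction a) (simp_all add: depends_only_TD)
qed

lemma diff_fun_TDJ: "diff_fun m g \<Longrightarrow> diff_fun m (TDJ m a b g)"
proof -
  assume g: "diff_fun m g"
  have "diff_fun m ((TD m 2 ^^ b) g)" by (induction b) (simp_all add: g diff_fun_TD)
  then show ?thesis unfolding TDJ_def by (induction a) (simp_all add: diff_fun_TD)
qed

lemma diff_funs_common_order:
  assumes "\<And>n. n \<in> {1..m} \<Longrightarrow> diff_fun m (Q n)"
  obtains N where "\<And>n. n \<in> {1..m} \<Longrightarrow> depends_only m N (Q n)"
proof -
  obtain Nf where "\<And>n. n \<in> {1..m} \<Longrightarrow> depends_only m (Nf n) (Q n)"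
    using assms unfolding diff_fun_def by metis
  then have "depends_only m (\<Sum>k\<in>{1..m}. Nf k) (Q n)" if "n \<in> {1..m}" for n
    by (rule depends_only_mono[OF _ member_le_sum[OF that]]) (use that in simp_all)
  then show ?thesis using that by blast
qed

lemma depends_only_prw:
  assumes "\<And>n. n \<in> {1..m} \<Longrightarrow> depends_only m NQ (Q n)" "depends_only m N f"
  shows "depends_only m (NQ + N) (prw m Q f)"
proof -
  have "depends_only m (NQ + N) (prw_coeff m Q c)" if "c \<in> th_coords m N" for c
  proof (rule th_coordsE[OF that])
    fix n a b assume "c = Th n a b" "n \<in> {1..m}" "a + b \<le> N"
    then show ?thesis
      using depends_only_TDJ[OF assms(1), of n b a] by (auto simp: prw_coeff_def elim: depends_only_mono)
  qed
  then show ?thesis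
    unfolding prw_eq_vfield[OF assms(2)] using assms(2)
    by (intro depends_only_vfield) (auto elim: depends_only_mono)
qed

lemma smooth_jet_prw_coeff:
  assumes "\<And>n. n \<in> {1..m} \<Longrightarrow> diff_fun m (Q n)" "c \<in> th_coords m N"
  shows "smooth_jet (prw_coeff m Q c)"
  using assms(2)
proof (rule th_coordsE)
  fix n a b assume "c = Th n a b" "n \<in> {1..m}"
  then show ?thesis using diff_fun_TDJ[OF assms(1)] by (simp add: prw_coeff_def diff_fun_def)
qed

lemma diff_fun_prw:
  assumes Q: "\<And>n. n \<in> {1..m} \<Longrightarrow> diff_fun m (Q n)" and f: "diff_fun m f"
  shows "diff_fun m (prw m Q f)"
proof -
  obtain N where N: "depends_only m N f" and "smooth_jet f" using f by (auto simp: diff_fun_def)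
  obtain NQ where "\<And>n. n \<in> {1..m} \<Longrightarrow> depends_only m NQ (Q n)"
    using diff_funs_common_order[of m Q, OF Q] by blast
  moreover have "smooth_jet (prw_coeff m Q c)" if "c \<in> th_coords m N" for c
    using smooth_jet_prw_coeff[OF Q that] .
  ultimately show ?thesis
    using depends_only_prw[OF _ N] \<open>smooth_jet f\<close>
    unfolding diff_fun_def prw_eq_vfield[OF N] by (blast intro: smooth_jet_vfield finite_th_coords)
qed

lemma diff_fun_coord_differentiable: "diff_fun m f \<Longrightarrow> coord_differentiable f"
  by (auto simp: diff_fun_def intro: smooth_jet_coord_differentiable)

lemma diff_fun_bilinear:
  assumes "bounded_bilinear P" "diff_fun m f" "diff_fun m g"
  shows "diff_fun m (\<lambda>q. P (f q) (g q))"
proof -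
  obtain N where "depends_only m N f" "depends_only m N g"
    using diff_fun_common_order[OF assms(2,3)] .
  then show ?thesis
    using assms smooth_jet_bilinear unfolding diff_fun_def by (blast intro: depends_only_comp2)
qed

lemma diff_fun_diff:
  assumes "diff_fun m f" "diff_fun m g"
  shows "diff_fun m (\<lambda>q. f q - g q)"
proof -
  obtain N where "depends_only m N f" "depends_only m N g"
    using diff_fun_common_order[OF assms] .
  then show ?thesis
    using assms smooth_jet_diff unfolding diff_fun_def by (blast intro: depends_only_comp2)
qed

lemma TD_bilinear:
  assumes P: "bounded_bilinear P"
    and f: "depends_only m N f" "coord_differentiable f"
    and g: "depends_only m N g" "coord_differentiable g"
  shows "TD m \<alpha> (\<lambda>q. P (f q) (g q)) p = P (f p) (TD m \<alpha> g p) + P (TD m \<alpha> f p) (g p)"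
  unfolding TD_eq_vfield[OF depends_only_comp2[OF f(1) g(1)]] TD_eq_vfield[OF f(1)] TD_eq_vfield[OF g(1)]
  by (rule vfield_bilinear[OF P f(2) g(2)])

lemma prw_bilinear:
  assumes P: "bounded_bilinear P" and "diff_fun m f" "diff_fun m g"
  shows "prw m Q (\<lambda>q. P (f q) (g q)) p = P (f p) (prw m Q g p) + P (prw m Q f p) (g p)"
proof -
  obtain N where f: "depends_only m N f" and g: "depends_only m N g"
    using diff_fun_common_order[OF assms(2,3)] .
  show ?thesis
    unfolding prw_eq_vfield[OF depends_only_comp2[OF f g]] prw_eq_vfield[OF f] prw_eq_vfield[OF g]
    by (rule vfield_bilinear[OF P]) (use assms diff_fun_coord_differentiable in auto)
qed

lemma prw_add:
  assumes "diff_fun m f" "diff_fun m g"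
  shows "prw m Q (\<lambda>q. f q + g q) p = prw m Q f p + prw m Q g p"
proof -
  obtain N where f: "depends_only m N f" and g: "depends_only m N g"
    using diff_fun_common_order[OF assms] .
  show ?thesis
    unfolding prw_eq_vfield[OF depends_only_comp2[OF f g]] prw_eq_vfield[OF f] prw_eq_vfield[OF g]
    by (rule vfield_add) (use assms diff_fun_coord_differentiable in auto)
qed

lemma prw_diff:
  assumes "diff_fun m f" "diff_fun m g"
  shows "prw m Q (\<lambda>q. f q - g q) p = prw m Q f p - prw m Q g p"
proof -
  obtain N where f: "depends_only m N f" and g: "depends_only m N g"
    using diff_fun_common_order[OF assms] .
  show ?thesis
    unfolding prw_eq_vfield[OF depends_only_comp2[OF f g]] prw_eq_vfield[OF f] prw_eq_vfield[OF g]
    by (rule vfield_diff) (use assms diff_fun_coord_differentiable in auto)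
qed

lemma TD_matrix_inv:
  fixes \<Phi> :: "jet \<Rightarrow> 'k::finite cmat"
  assumes \<Phi>: "diff_fun m \<Phi>" and inv: "\<And>p. invertible (\<Phi> p)"
  shows "TD m \<alpha> (\<lambda>q. matrix_inv (\<Phi> q)) p = - (matrix_inv (\<Phi> p) ** TD m \<alpha> \<Phi> p ** matrix_inv (\<Phi> p))"
proof -
  obtain N where N: "depends_only m N \<Phi>" using \<Phi> by (auto simp: diff_fun_def)
  interpret mm: bounded_bilinear "(**) :: 'k cmat \<Rightarrow> 'k cmat \<Rightarrow> 'k cmat"
    by (rule bounded_bilinear_matrix_mult)
  let ?L = "\<lambda>X. - (matrix_inv (\<Phi> p) ** X ** matrix_inv (\<Phi> p))"
  interpret L: bounded_linear ?L
    by (intro bounded_linear_minus mm.bounded_linear_left[THEN bounded_linear_compose] mm.bounded_linear_right)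
  show ?thesis
    unfolding TD_eq_vfield[OF depends_only_comp[OF N]] TD_eq_vfield[OF N] vfield_def
      pd_matrix_inv[OF diff_fun_coord_differentiable[OF \<Phi>] inv]
    by (simp only: L.sum L.scaleR)
qed

lemma shift_eq: "shift \<alpha> (n, a, b) = (if \<alpha> = Suc 0 then Th n (Suc a) b else Th n a (Suc b))"
  by (cases \<alpha> rule: xc.cases) auto

lemma TD_eq_TD_2: "\<alpha> \<noteq> Suc 0 \<Longrightarrow> TD m \<alpha> = TD m 2"
  by (intro ext) (simp add: TD_def shift_eq numeral_2_eq_2 split_beta, cases \<alpha> rule: xc.cases, auto)

lemma TD_coord:
  assumes "n \<in> {1..m}"
  shows "TD m \<alpha> (\<lambda>q. q (Th n a b)) p = p (shift \<alpha> (n, a, b))"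
proof -
  have dep: "depends_only m (a + b) (\<lambda>q. q (Th n a b))"
    using assms by (intro depends_only_coord) (simp add: thcoords_def)
  show ?thesis
    using assms unfolding TD_eq_vfield[OF dep] vfield_coord[OF finite_td_coords]
    by (simp add: td_coords_def Th_in_th_coords_iff td_coeff_def)
qed

lemma prw_coord:
  assumes "n \<in> {1..m}"
  shows "prw m Q (\<lambda>q. q (Th n a b)) p = TDJ m a b (Q n) p"
proof -
  have dep: "depends_only m (a + b) (\<lambda>q. q (Th n a b))"
    using assms by (intro depends_only_coord) (simp add: thcoords_def)
  show ?thesis
    using assms unfolding prw_eq_vfield[OF dep] vfield_coord[OF finite_th_coords]
    by (simp add: Th_in_th_coords_iff prw_coeff_def)
qed

lemma sum_th_coords_reduce:
  assumes g: "depends_only m N g" and "N \<le> N'"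
    and FG: "\<And>n a b. n \<in> {1..m} \<Longrightarrow> a + b \<le> N \<Longrightarrow> F (Th n a b) = G (Th n a b)"
  shows "(\<Sum>c\<in>th_coords m N'. F c *\<^sub>R pd c g p) = (\<Sum>c\<in>th_coords m N. G c *\<^sub>R pd c g p)"
proof -
  have "pd c g p = 0" if "c \<in> th_coords m N' - th_coords m N" for c
    using that by (auto elim!: th_coordsE intro!: pd_eq_0_if_not_relevant[OF g] simp: Th_in_th_coords_iff)
  then have "(\<Sum>c\<in>th_coords m N'. F c *\<^sub>R pd c g p) = (\<Sum>c\<in>th_coords m N. F c *\<^sub>R pd c g p)"
    by (intro sum.mono_neutral_right finite_th_coords th_coords_mono \<open>N \<le> N'\<close>) auto
  also have "\<dots> = (\<Sum>c\<in>th_coords m N. G c *\<^sub>R pd c g p)"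
    by (intro sum.cong refl) (auto elim!: th_coordsE simp: FG)
  finally show ?thesis .
qed

lemma vfield_td_coeff_td_coeff:
  assumes \<alpha>\<beta>: "{\<alpha>, \<beta>} = {Suc 0, 2}" and n: "n \<in> {1..m}" and "a + b < N"
  shows "vfield (td_coeff \<alpha>) (td_coords m \<alpha> N) (td_coeff \<beta> (Th n a b)) p = p (Th n (Suc a) (Suc b))"
proof -
  have "depends_only m N (\<lambda>q. q (shift \<beta> (n, a, b)))"
    using assms by (intro depends_only_coord) (auto simp: shift_eq thcoords_def)
  then show ?thesis
    using \<alpha>\<beta> TD_coord[OF n]
    by (auto simp: td_coeff_def shift_eq doubleton_eq_iff simp flip: TD_eq_vfield)
qed

lemma sum_vfield_td_coeff:
  assumes \<alpha>\<beta>: "{\<alpha>, \<beta>} = {Suc 0, 2}" and g: "depends_only m N g"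
  shows "(\<Sum>d\<in>td_coords m \<beta> (Suc N).
      vfield (td_coeff \<alpha>) (td_coords m \<alpha> (Suc N)) (td_coeff \<beta> d) p *\<^sub>R pd d g p)
    = (\<Sum>c\<in>th_coords m N. (case c of Th n a b \<Rightarrow> p (Th n (Suc a) (Suc b)) | _ \<Rightarrow> 0) *\<^sub>R pd c g p)"
  unfolding sum_td_coords td_coeff_xc vfield_const scaleR_zero_left add_0
proof (rule sum_th_coords_reduce[OF g])
  fix n a b assume "n \<in> {1..m}" "a + b \<le> N"
  then show "vfield (td_coeff \<alpha>) (td_coords m \<alpha> (Suc N)) (td_coeff \<beta> (Th n a b)) p
      = (case Th n a b of Th n a b \<Rightarrow> p (Th n (Suc a) (Suc b)) | _ \<Rightarrow> 0)"
    using vfield_td_coeff_td_coeff[OF \<alpha>\<beta>] by simp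
qed simp

lemma TD_TD_commute:
  fixes g :: "jet \<Rightarrow> 'v::euclidean_space"
  assumes g: "diff_fun m g"
  shows "TD m (Suc 0) (TD m 2 g) = TD m 2 (TD m (Suc 0) g)"
proof
  fix p :: jet
  obtain N where N: "depends_only m N g" and "smooth_jet g" using g by (auto simp: diff_fun_def)
  define X :: "(jet \<Rightarrow> 'v) \<Rightarrow> jet \<Rightarrow> 'v" where "X = vfield (td_coeff (Suc 0)) (td_coords m (Suc 0) (Suc N))"
  define Y :: "(jet \<Rightarrow> 'v) \<Rightarrow> jet \<Rightarrow> 'v" where "Y = vfield (td_coeff 2) (td_coords m 2 (Suc N))"
  have comm: "X (Y g) p - Y (X g) p = 0"
    unfolding X_def Y_def
    using vfield_commutator[OF _ _ \<open>smooth_jet g\<close>]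
      sum_vfield_td_coeff[OF _ N, of "Suc 0" 2] sum_vfield_td_coeff[OF _ N, of 2 "Suc 0"]
    by (simp add: smooth_jet_coord_differentiable smooth_jet_td_coeff insert_commute)
  have "depends_only m (Suc N) g" using depends_only_mono[OF N] by simp
  then have "TD m (Suc 0) (TD m 2 g) = X (Y g)" "TD m 2 (TD m (Suc 0) g) = Y (X g)"
    unfolding X_def Y_def by (metis TD_eq_vfield depends_only_TD[OF N])+
  then show "TD m (Suc 0) (TD m 2 g) p = TD m 2 (TD m (Suc 0) g) p" using comm by simp
qed

lemma TD_TDJ:
  fixes g :: "jet \<Rightarrow> 'v::euclidean_space"
  assumes g: "diff_fun m g"
  shows "TD m \<alpha> (TDJ m a b g) = (if \<alpha> = Suc 0 then TDJ m (Suc a) b g else TDJ m a (Suc b) g)"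
proof (cases "\<alpha> = Suc 0")
  case False
  have "diff_fun m ((TD m 2 ^^ b) g)" using g by (induction b) (simp_all add: diff_fun_TD)
  then have d: "diff_fun m ((TD m (Suc 0) ^^ k) ((TD m 2 ^^ b) g))" for k
    by (induction k) (simp_all add: diff_fun_TD)
  have "TD m 2 ((TD m (Suc 0) ^^ k) ((TD m 2 ^^ b) g)) = (TD m (Suc 0) ^^ k) ((TD m 2 ^^ Suc b) g)" for k
    by (induction k) (simp_all add: TD_TD_commute[OF d, symmetric])
  then show ?thesis using False unfolding TD_eq_TD_2[OF False] by (simp add: TDJ_def)
qed (simp add: TDJ_def)

lemma vfield_td_coeff_prw_coeff:
  assumes Q: "\<And>n. n \<in> {1..m} \<Longrightarrow> diff_fun m (Q n)"
    and NQ: "\<And>n. n \<in> {1..m} \<Longrightarrow> depends_only m NQ (Q n)"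
    and n: "n \<in> {1..m}" and "NQ + a + b \<le> N"
  shows "vfield (td_coeff \<alpha>) (td_coords m \<alpha> N) (prw_coeff m Q (Th n a b)) p
    = prw_coeff m Q (shift \<alpha> (n, a, b)) p"
proof -
  have "depends_only m N (TDJ m a b (Q n))"
    using \<open>NQ + a + b \<le> N\<close> by (intro depends_only_mono[OF depends_only_TDJ[OF NQ[OF n]]]) simp
  then show ?thesis
    by (simp add: prw_coeff_def shift_eq TD_TDJ[OF Q[OF n]] flip: TD_eq_vfield)
qed

lemma vfield_prw_coeff_td_coeff:
  assumes n: "n \<in> {1..m}" and "a + b < N"
  shows "vfield (prw_coeff m Q) (th_coords m N) (td_coeff \<alpha> (Th n a b)) p
    = prw_coeff m Q (shift \<alpha> (n, a, b)) p"
proof -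
  have "depends_only m N (\<lambda>q. q (shift \<alpha> (n, a, b)))"
    using assms by (intro depends_only_coord) (auto simp: shift_eq thcoords_def)
  then show ?thesis
    using prw_coord[OF n] by (simp add: td_coeff_def prw_coeff_def shift_eq flip: prw_eq_vfield)
qed

lemma TD_prw_commute:
  fixes f :: "jet \<Rightarrow> 'v::euclidean_space"
  assumes Q: "\<And>n. n \<in> {1..m} \<Longrightarrow> diff_fun m (Q n)" and f: "diff_fun m f"
  shows "TD m \<alpha> (prw m Q f) = prw m Q (TD m \<alpha> f)"
proof
  fix p :: jet
  obtain N where N: "depends_only m N f" and "smooth_jet f" using f by (auto simp: diff_fun_def)
  obtain NQ where NQ: "\<And>n. n \<in> {1..m} \<Longrightarrow> depends_only m NQ (Q n)"
    using diff_funs_common_order[of m Q, OF Q] by blast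
  let ?C = "td_coords m \<alpha> (NQ + Suc N)" and ?D = "th_coords m (Suc N)"
  define X :: "(jet \<Rightarrow> 'v) \<Rightarrow> jet \<Rightarrow> 'v" where "X = vfield (td_coeff \<alpha>) ?C"
  define Y :: "(jet \<Rightarrow> 'v) \<Rightarrow> jet \<Rightarrow> 'v" where "Y = vfield (prw_coeff m Q) ?D"
  define shifted where "shifted c = (case c of Th n a b \<Rightarrow> prw_coeff m Q (shift \<alpha> (n, a, b)) p | _ \<Rightarrow> 0)" for c
  have "X (Y f) p - Y (X f) p
      = (\<Sum>d\<in>?D. vfield (td_coeff \<alpha>) ?C (prw_coeff m Q d) p *\<^sub>R pd d f p)
      - (\<Sum>c\<in>?C. vfield (prw_coeff m Q) ?D (td_coeff \<alpha> c) p *\<^sub>R pd c f p)"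
    unfolding X_def Y_def
    by (rule vfield_commutator[OF _ _ \<open>smooth_jet f\<close>])
      (auto intro: smooth_jet_coord_differentiable smooth_jet_td_coeff smooth_jet_prw_coeff[OF Q])
  also have "(\<Sum>d\<in>?D. vfield (td_coeff \<alpha>) ?C (prw_coeff m Q d) p *\<^sub>R pd d f p)
      = (\<Sum>c\<in>th_coords m N. shifted c *\<^sub>R pd c f p)"
  proof (rule sum_th_coords_reduce[OF N])
    fix n a b assume "n \<in> {1..m}" "a + b \<le> N"
    then show "vfield (td_coeff \<alpha>) ?C (prw_coeff m Q (Th n a b)) p = shifted (Th n a b)"
      by (simp add: shifted_def) (rule vfield_td_coeff_prw_coeff[where Q=Q, OF Q NQ], simp_all)
  qed simp
  also have "(\<Sum>c\<in>?C. vfield (prw_coeff m Q) ?D (td_coeff \<alpha> c) p *\<^sub>R pd c f p)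
      = (\<Sum>c\<in>th_coords m N. shifted c *\<^sub>R pd c f p)"
    unfolding sum_td_coords td_coeff_xc vfield_const scaleR_zero_left add_0
  proof (rule sum_th_coords_reduce[OF N])
    fix n a b assume "n \<in> {1..m}" "a + b \<le> N"
    then show "vfield (prw_coeff m Q) ?D (td_coeff \<alpha> (Th n a b)) p = shifted (Th n a b)"
      by (simp add: shifted_def vfield_prw_coeff_td_coeff)
  qed simp
  finally have comm: "X (Y f) p = Y (X f) p" by simp
  have f1: "depends_only m (Suc N) f" and f2: "depends_only m (NQ + Suc N) f"
    and pf: "depends_only m (NQ + Suc N) (prw m Q f)"
    using depends_only_mono[OF N] depends_only_mono[OF depends_only_prw[OF NQ N]] by simp_all
  have "TD m \<alpha> (prw m Q f) = X (Y f)"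
    by (simp only: TD_eq_vfield[OF pf] X_def) (simp only: prw_eq_vfield[OF f1] Y_def)
  moreover have "prw m Q (TD m \<alpha> f) = Y (X f)"
    by (simp only: prw_eq_vfield[OF depends_only_TD[OF N]] Y_def) (simp only: TD_eq_vfield[OF f2] X_def)
  ultimately show "TD m \<alpha> (prw m Q f) p = prw m Q (TD m \<alpha> f) p" using comm by simp
qed

section \<open>The three conditions\<close>

lemma zero_set_eq_0:
  assumes "p \<in> zero_set m E" "f \<in> E"
  shows "f p = 0"
proof -
  have "TDJ m 0 0 f p = 0" using assms unfolding zero_set_def by blast
  then show ?thesis by (simp add: TDJ_def)
qed

lemma prw_LSP:
  fixes u \<Phi> :: "jet \<Rightarrow> 'k::finite cmat"
  assumes Q: "\<And>n. n \<in> {1..m} \<Longrightarrow> diff_fun m (Q n)" and u: "diff_fun m u" and \<Phi>: "diff_fun m \<Phi>"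
  shows "prw m Q (\<lambda>q. TD m \<alpha> \<Phi> q - u q ** \<Phi> q) p
    = TD m \<alpha> (prw m Q \<Phi>) p - (u p ** prw m Q \<Phi> p + prw m Q u p ** \<Phi> p)"
  using prw_diff[OF diff_fun_TD[OF \<Phi>] diff_fun_bilinear[OF bounded_bilinear_matrix_mult u \<Phi>]]
    prw_bilinear[OF bounded_bilinear_matrix_mult u \<Phi>] TD_prw_commute[OF Q \<Phi>]
  by simp

lemma TD_matrix_inv_mult:
  fixes \<Phi> \<Psi> :: "jet \<Rightarrow> 'k::finite cmat"
  assumes \<Phi>: "diff_fun m \<Phi>" and inv: "\<And>p. invertible (\<Phi> p)" and \<Psi>: "diff_fun m \<Psi>"
  shows "TD m \<alpha> (\<lambda>q. matrix_inv (\<Phi> q) ** \<Psi> q) p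
    = matrix_inv (\<Phi> p) ** (TD m \<alpha> \<Psi> p - TD m \<alpha> \<Phi> p ** matrix_inv (\<Phi> p) ** \<Psi> p)"
proof -
  interpret mm: bounded_bilinear "(**) :: 'k cmat \<Rightarrow> 'k cmat \<Rightarrow> 'k cmat"
    by (rule bounded_bilinear_matrix_mult)
  obtain N where N: "depends_only m N \<Phi>" "depends_only m N \<Psi>"
    using diff_fun_common_order[OF \<Phi> \<Psi>] .
  have "TD m \<alpha> (\<lambda>q. matrix_inv (\<Phi> q) ** \<Psi> q) p
      = matrix_inv (\<Phi> p) ** TD m \<alpha> \<Psi> p + TD m \<alpha> (\<lambda>q. matrix_inv (\<Phi> q)) p ** \<Psi> p"
    by (rule TD_bilinear[OF bounded_bilinear_matrix_mult depends_only_comp[OF N(1)]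
          coord_differentiable_matrix_inv[OF diff_fun_coord_differentiable[OF \<Phi>] inv]
          N(2) diff_fun_coord_differentiable[OF \<Psi>]])
  then show ?thesis
    by (simp add: TD_matrix_inv[OF \<Phi> inv] mm.diff_right mm.minus_left matrix_mul_assoc)
qed

lemma prw_zero_curvature:
  fixes A B :: "jet \<Rightarrow> 'k::finite cmat"
  assumes Q: "\<And>n. n \<in> {1..m} \<Longrightarrow> diff_fun m (Q n)" and A: "diff_fun m A" and B: "diff_fun m B"
  shows "prw m Q (\<lambda>q. TD m 2 A q - TD m 1 B q + brk (A q) (B q)) p
    = TD m 2 (prw m Q A) p - TD m 1 (prw m Q B) p + brk (prw m Q A p) (B p) + brk (A p) (prw m Q B p)"
  using prw_add[OF diff_fun_diff[OF diff_fun_TD[OF A] diff_fun_TD[OF B]]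
      diff_fun_bilinear[OF bounded_bilinear_brk A B]]
    prw_diff[OF diff_fun_TD[OF A] diff_fun_TD[OF B]] prw_bilinear[OF bounded_bilinear_brk A B]
    TD_prw_commute[OF Q A] TD_prw_commute[OF Q B]
  by simp

lemma matrix_inv_mult_prw_in_lie_alg:
  fixes \<Phi> :: "jet \<Rightarrow> 'k::finite cmat"
  assumes G: "matrix_lie_group G" and \<Phi>G: "\<And>p. \<Phi> p \<in> G" and \<Phi>: "diff_fun m \<Phi>"
  shows "matrix_inv (\<Phi> p) ** prw m Q \<Phi> p \<in> lie_alg G"
proof -
  interpret mm: bounded_bilinear "(**) :: 'k cmat \<Rightarrow> 'k cmat \<Rightarrow> 'k cmat"
    by (rule bounded_bilinear_matrix_mult)
  obtain N where N: "depends_only m N \<Phi>" using \<Phi> by (auto simp: diff_fun_def)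
  have "matrix_inv (\<Phi> p) ** prw m Q \<Phi> p
      = (\<Sum>c\<in>th_coords m N. prw_coeff m Q c p *\<^sub>R (matrix_inv (\<Phi> p) ** pd c \<Phi> p))"
    unfolding prw_eq_vfield[OF N] vfield_def by (simp add: mm.sum_right mm.scaleR_right)
  also have "\<dots> \<in> lie_alg G"
    by (intro lie_alg_sum[OF G finite_th_coords] lie_alg_scaleR matrix_inv_mult_pd_in_lie_alg[OF G \<Phi>G]
        diff_fun_coord_differentiable[OF \<Phi>])
  finally show ?thesis .
qed

lemma TD_eq_on_LSP_zero_set:
  assumes "p \<in> zero_set m {(\<lambda>p. TD m \<alpha> \<Phi> p - u \<alpha> p ** \<Phi> p) | \<alpha>. \<alpha> \<in> {1::nat, 2}}"
    and "\<alpha> \<in> {1, 2}"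
  shows "TD m \<alpha> \<Phi> p = u \<alpha> p ** \<Phi> p"
proof -
  have "(\<lambda>q. TD m \<alpha> \<Phi> q - u \<alpha> q ** \<Phi> q) \<in> {(\<lambda>p. TD m \<alpha> \<Phi> p - u \<alpha> p ** \<Phi> p) | \<alpha>. \<alpha> \<in> {1::nat, 2}}"
    using assms(2) by blast
  from zero_set_eq_0[OF assms(1) this] show ?thesis by simp
qed

lemma TD_matrix_inv_mult_eq_iff:
  fixes \<Phi> \<Psi> :: "jet \<Rightarrow> 'k::finite cmat"
  assumes \<Phi>: "diff_fun m \<Phi>" and inv: "\<And>p. invertible (\<Phi> p)" and \<Psi>: "diff_fun m \<Psi>"
    and LSP: "TD m \<alpha> \<Phi> p = U ** \<Phi> p"
  shows "TD m \<alpha> (\<lambda>q. matrix_inv (\<Phi> q) ** \<Psi> q) p = matrix_inv (\<Phi> p) ** A ** \<Phi> p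
    \<longleftrightarrow> TD m \<alpha> \<Psi> p = U ** \<Psi> p + A ** \<Phi> p"
proof -
  have "TD m \<alpha> \<Phi> p ** matrix_inv (\<Phi> p) ** \<Psi> p = U ** \<Psi> p"
    unfolding LSP by (metis matrix_mul_assoc matrix_inv_left_right(2)[OF inv] matrix_mul_lid)
  then show ?thesis
    unfolding TD_matrix_inv_mult[OF \<Phi> inv \<Psi>]
    by (simp add: matrix_mul_assoc[symmetric] matrix_inv_mult_cancel_left[OF inv] diff_eq_eq add.commute)
qed

lemma gen_inf_sym_prw_iff:
  fixes u :: "nat \<Rightarrow> jet \<Rightarrow> 'k::finite cmat" and \<Phi> :: "jet \<Rightarrow> 'k cmat"
  assumes G: "matrix_lie_group G" and \<Phi>G: "\<And>p. \<Phi> p \<in> G" and \<Phi>: "diff_fun m \<Phi>"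
    and Q: "\<And>n. n \<in> {1..m} \<Longrightarrow> diff_fun m (Q n)" and u: "diff_fun m (u 1)" "diff_fun m (u 2)"
    and sym: "\<forall>p\<in>S. prw m Q (\<lambda>q. TD m 2 (u 1) q - TD m 1 (u 2) q + brk (u 1 q) (u 2 q)) p = 0"
  shows "gen_inf_sym m G S u \<Phi> (\<lambda>\<alpha>. prw m Q (u \<alpha>)) (prw m Q \<Phi>) \<longleftrightarrow>
    (\<forall>\<alpha>\<in>{1,2}. \<forall>p\<in>S. TD m \<alpha> (prw m Q \<Phi>) p = u \<alpha> p ** prw m Q \<Phi> p + prw m Q (u \<alpha>) p ** \<Phi> p)"
proof -
  have "\<forall>p\<in>S. TD m 2 (prw m Q (u 1)) p - TD m 1 (prw m Q (u 2)) p
      + brk (prw m Q (u 1) p) (u 2 p) + brk (u 1 p) (prw m Q (u 2) p) = 0"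
    using sym prw_zero_curvature[OF Q u] by simp
  moreover have "\<forall>p. matrix_inv (\<Phi> p) ** prw m Q \<Phi> p \<in> lie_alg G"
    using matrix_inv_mult_prw_in_lie_alg[OF G \<Phi>G \<Phi>] by blast
  ultimately show ?thesis unfolding gen_inf_sym_def by blast
qed

theorem proposition3:
  fixes m :: nat
    and G :: "'k::finite cmat set"
    and u :: "nat \<Rightarrow> jet \<Rightarrow> 'k cmat"
    and \<Phi> :: "jet \<Rightarrow> 'k cmat"
    and Q :: "nat \<Rightarrow> jet \<Rightarrow> real"
  defines "\<Delta> \<equiv> (\<lambda>p. TD m 2 (u 1) p - TD m 1 (u 2) p + brk (u 1 p) (u 2 p))"
  defines "S \<equiv> zero_set m {\<Delta>}"
  defines "L \<equiv> zero_set m {(\<lambda>p. TD m \<alpha> \<Phi> p - u \<alpha> p ** \<Phi> p) | \<alpha>. \<alpha> \<in> {1::nat, 2}}"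
  defines "F \<equiv> (\<lambda>p. matrix_inv (\<Phi> p) ** prw m Q \<Phi> p)"
  assumes m: "1 \<le> m"
    and G: "matrix_lie_group G"
    and u_df: "\<forall>\<alpha>\<in>{1,2}. diff_fun m (u \<alpha>)"
    and u_g: "\<forall>\<alpha>\<in>{1,2}. \<forall>p. u \<alpha> p \<in> lie_alg G"
    and indep: "\<exists>E :: (jet \<Rightarrow> real) set. finite E \<and> (\<forall>e\<in>E. diff_fun m e \<and> indep_x3 e)
                  \<and> S = zero_set m E"
    and Phi_df: "diff_fun m \<Phi>"
    and Phi_G: "\<forall>p. \<Phi> p \<in> G"
    and compat: "L \<subseteq> S"
    and Phi_solves: "S \<subseteq> L"
    and Q_df: "\<forall>n\<in>{1..m}. diff_fun m (Q n) \<and> indep_x3 (Q n)"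
    and sym: "\<forall>p\<in>S. prw m Q \<Delta> p = 0"
  shows "((\<forall>\<alpha>\<in>{1,2}. \<forall>p\<in>L. prw m Q (\<lambda>q. TD m \<alpha> \<Phi> q - u \<alpha> q ** \<Phi> q) p = 0)
            \<longleftrightarrow> (\<forall>\<alpha>\<in>{1,2}. \<forall>p\<in>S. TD m \<alpha> F p = matrix_inv (\<Phi> p) ** prw m Q (u \<alpha>) p ** \<Phi> p))
       \<and> ((\<forall>\<alpha>\<in>{1,2}. \<forall>p\<in>S. TD m \<alpha> F p = matrix_inv (\<Phi> p) ** prw m Q (u \<alpha>) p ** \<Phi> p)
            \<longleftrightarrow> gen_inf_sym m G S u \<Phi> (\<lambda>\<alpha>. prw m Q (u \<alpha>)) (prw m Q \<Phi>))"
proof -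
  have inv: "\<And>p. invertible (\<Phi> p)" using G Phi_G unfolding matrix_lie_group_def by blast
  have Q: "\<And>n. n \<in> {1..m} \<Longrightarrow> diff_fun m (Q n)" and u: "\<And>\<alpha>. \<alpha> \<in> {1,2} \<Longrightarrow> diff_fun m (u \<alpha>)"
    using Q_df u_df by auto
  have "L = S" using compat Phi_solves by blast
  let ?E = "\<lambda>\<alpha> p. TD m \<alpha> (prw m Q \<Phi>) p = u \<alpha> p ** prw m Q \<Phi> p + prw m Q (u \<alpha>) p ** \<Phi> p"
  have "prw m Q (\<lambda>q. TD m \<alpha> \<Phi> q - u \<alpha> q ** \<Phi> q) p = 0 \<longleftrightarrow> ?E \<alpha> p"
    if "\<alpha> \<in> {1,2}" for \<alpha> p
    using prw_LSP[of m Q "u \<alpha>" \<Phi> \<alpha> p, OF Q u[OF that] Phi_df] by simp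
  moreover have "TD m \<alpha> F p = matrix_inv (\<Phi> p) ** prw m Q (u \<alpha>) p ** \<Phi> p \<longleftrightarrow> ?E \<alpha> p"
    if "\<alpha> \<in> {1,2}" "p \<in> S" for \<alpha> p
    using TD_eq_on_LSP_zero_set[where p=p and m=m and \<alpha>=\<alpha> and \<Phi>=\<Phi> and u=u] that \<open>L = S\<close> unfolding F_def L_def
    by (intro TD_matrix_inv_mult_eq_iff[OF Phi_df inv diff_fun_prw[of m Q, OF Q Phi_df]]) auto
  moreover have "gen_inf_sym m G S u \<Phi> (\<lambda>\<alpha>. prw m Q (u \<alpha>)) (prw m Q \<Phi>) \<longleftrightarrow> (\<forall>\<alpha>\<in>{1,2}. \<forall>p\<in>S. ?E \<alpha> p)"
    using sym unfolding \<Delta>_def by (intro gen_inf_sym_prw_iff[OF G _ Phi_df Q]) (simp_all add: Phi_G u_df)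
  ultimately show ?thesis unfolding \<open>L = S\<close> by blast
qed

end
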